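(* For every $\varepsilon\in(0,1]$ there exists $b_0$ such that for every $b\geq b_0$ there exists $\gamma_0>0$ such that for every $\gamma\in(0,\gamma_0]$ there exists $n_0$ such that for every $n\geq n_0$ the following holds. Let $G$ be an $(n,\varepsilon)$-digraph and $\mathbf{x}$ a $b$-normal perfect fractional matching of $G$. Let $\Delta:=e^{\gamma\sqrt{\ln n}}$, let $T=(r_0,\ldots,r_m)$ be an oriented tree with $\Delta(T)\leq\Delta$ and $n^{1/4}+1\leq|T|\leq3\Delta n^{1/4}$, and let $R=(R_0,\ldots,R_m)$ be a random tree in $G$ according to $T$ and $\mathbf{x}$. Let $\mathcal{S}$ be a collection of at most $n^2$ subsets of $V(G)$. Let $\mathcal{E}$ be the event that $R$ is self-avoiding and $\{R_0,\ldots,R_m\}$ is $(\mathcal{S},n^{\frac14-\frac1{17\sqrt{\ln n}}},n^{-\frac34-\frac1{18\sqrt{\ln n}}})$-expected. Then $\mathbb{P}[\mathcal{E}]\geq1-m^2\frac bn-n^2\frac1{n^3}-4n\frac1{n^3}\geq1-n^{-1/3}$.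
   Context: $\log=\log_2$, $\ln$ natural logarithm. Digraphs have no loops and at most one edge from $v$ to $w$ per ordered pair. An $(n,\varepsilon)$-digraph is a digraph on $n$ vertices with every in- and out-degree at least $(\frac12+\varepsilon)n$. A perfect fractional matching of $G$ is $\mathbf{x}\colon E(G)\to\mathbb{R}_{\geq0}$ with $\sum_{w\in N^+(v)}\mathbf{x}_{vw}=1=\sum_{w\in N^-(v)}\mathbf{x}_{wv}$ for all $v$; it is $b$-normal if $\frac1{bn}\leq\mathbf{x}_e\leq\frac bn$ for all $e$. $h^+_{\mathbf{x}}(v)=\sum_{w\in N^+(v)}\mathbf{x}_{vw}\log\frac1{\mathbf{x}_{vw}}$, $h^-_{\mathbf{x}}(v)=\sum_{w\in N^-(v)}\mathbf{x}_{wv}\log\frac1{\mathbf{x}_{wv}}$. $T=(r_0,\ldots,r_m)$ is $T$ rooted at $r_0$ with a breadth-first ordering; $\Delta(T)$ is the max degree of the underlying tree. A random tree according to $T$ and $\mathbf{x}$ is a random vector $R=(R_0,\dots,R_m)$ where $R_0$ is a fixed vertex of $G$ and, for each $j\geq1$ with parent $r_i$ of $r_j$, conditionally on $R_i=v$ and on the values of all $R_{i'}$ with $r_{i'}$ not a descendant of $r_j$ and $i'\neq i$, $R_j=w$ with probability $\mathbf{x}_{vw}$ if $r_ir_j\in E(T)$, $vw\in E(G)$; $\mathbf{x}_{wv}$ if $r_jr_i\in E(T)$, $wv\in E(G)$; $0$ otherwise. $R$ is self-avoiding if $R_i\neq R_j$ for all $i\neq j$. A set $M\subseteq V(G)$ is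 $(\mathcal{S},a)$-expected if $\big||M\cap S|-\frac{|M|}n|S|\big|<a$ for every $S\in\mathcal{S}$; it is $c$-expected if for every $v\in V(G)$: $\big|\sum_{w\in N^+(v)\cap M}\mathbf{x}_{vw}-\frac{|M|}n\big|<c$, $\big|\sum_{w\in N^+(v)\cap M}\mathbf{x}_{vw}\log\frac1{\mathbf{x}_{vw}}-\frac{|M|}nh^+_{\mathbf{x}}(v)\big|<c$, and the analogous two inequalities with $N^-(v)$, $\mathbf{x}_{wv}$ and $h^-_{\mathbf{x}}(v)$ hold; it is $(\mathcal{S},a,c)$-expected if it is both. *)

theory Defs
  imports Complex_Main "HOL-Library.FuncSet"
begin

definition out_nbrs :: "(nat \<times> nat) set \<Rightarrow> nat \<Rightarrow> nat set" where
  "out_nbrs E v = {w. (v, w) \<in> E}"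

definition in_nbrs :: "(nat \<times> nat) set \<Rightarrow> nat \<Rightarrow> nat set" where
  "in_nbrs E v = {w. (w, v) \<in> E}"

definition eps_digraph :: "nat \<Rightarrow> real \<Rightarrow> nat set \<Rightarrow> (nat \<times> nat) set \<Rightarrow> bool" where
  "eps_digraph n \<epsilon> V E \<longleftrightarrow> finite V \<and> card V = n \<and> E \<subseteq> V \<times> V \<and> (\<forall>v. (v, v) \<notin> E) \<and>
     (\<forall>v\<in>V. real (card (out_nbrs E v)) \<ge> (1/2 + \<epsilon>) * real n \<and>
            real (card (in_nbrs E v)) \<ge> (1/2 + \<epsilon>) * real n)"

definition perfect_fractional_matching ::
  "nat set \<Rightarrow> (nat \<times> nat) set \<Rightarrow> (nat \<Rightarrow> nat \<Rightarrow> real) \<Rightarrow> bool" where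
  "perfect_fractional_matching V E x \<longleftrightarrow>
     (\<forall>(v, w)\<in>E. x v w \<ge> 0) \<and>
     (\<forall>v\<in>V. (\<Sum>w\<in>out_nbrs E v. x v w) = 1 \<and> (\<Sum>w\<in>in_nbrs E v. x w v) = 1)"

definition b_normal :: "nat \<Rightarrow> real \<Rightarrow> (nat \<times> nat) set \<Rightarrow> (nat \<Rightarrow> nat \<Rightarrow> real) \<Rightarrow> bool" where
  "b_normal n b E x \<longleftrightarrow> (\<forall>(v, w)\<in>E. 1 / (b * real n) \<le> x v w \<and> x v w \<le> b / real n)"

definition h_out :: "(nat \<times> nat) set \<Rightarrow> (nat \<Rightarrow> nat \<Rightarrow> real) \<Rightarrow> nat \<Rightarrow> real" where
  "h_out E x v = (\<Sum>w\<in>out_nbrs E v. x v w * log 2 (1 / x v w))"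

definition h_in :: "(nat \<times> nat) set \<Rightarrow> (nat \<Rightarrow> nat \<Rightarrow> real) \<Rightarrow> nat \<Rightarrow> real" where
  "h_in E x v = (\<Sum>w\<in>in_nbrs E v. x w v * log 2 (1 / x w v))"

(* Oriented trees T = (r_0,...,r_m): vertex r_i is the natural number i, A is the arc set.
   The parent of r_j (j >= 1) is the unique earlier vertex adjacent to it. *)
definition tree_parent :: "(nat \<times> nat) set \<Rightarrow> nat \<Rightarrow> nat" where
  "tree_parent A j = (THE i. i < j \<and> ((i, j) \<in> A \<or> (j, i) \<in> A))"

(* A is an oriented tree on {0..m} rooted at 0, and 0,...,m is a breadth-first ordering:
   every j >= 1 has exactly one adjacent earlier vertex (its parent), every arc joins a
   vertex to its parent, no pair is joined in both directions, and parents are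
   non-decreasing along the ordering (breadth-first). *)
definition bfs_oriented_tree :: "nat \<Rightarrow> (nat \<times> nat) set \<Rightarrow> bool" where
  "bfs_oriented_tree m A \<longleftrightarrow>
     A \<subseteq> {0..m} \<times> {0..m} \<and>
     (\<forall>i j. (i, j) \<in> A \<longrightarrow> (j, i) \<notin> A) \<and>
     (\<forall>j\<in>{1..m}. \<exists>!i. i < j \<and> ((i, j) \<in> A \<or> (j, i) \<in> A)) \<and>
     (\<forall>(i, j)\<in>A. (i < j \<and> i = tree_parent A j) \<or> (j < i \<and> j = tree_parent A i)) \<and>
     (\<forall>j\<in>{1..m}. \<forall>k\<in>{1..m}. j \<le> k \<longrightarrow> tree_parent A j \<le> tree_parent A k)"

definition tree_degree :: "(nat \<times> nat) set \<Rightarrow> nat \<Rightarrow> nat" where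
  "tree_degree A i = card {j. (i, j) \<in> A \<or> (j, i) \<in> A}"

(* conditional probability that R_j = f j given R_(parent j) = f (parent j) *)
definition rt_weight ::
  "(nat \<times> nat) set \<Rightarrow> (nat \<Rightarrow> nat \<Rightarrow> real) \<Rightarrow> (nat \<times> nat) set \<Rightarrow> (nat \<Rightarrow> nat) \<Rightarrow> nat \<Rightarrow> real" where
  "rt_weight E x A f j =
     (let i = tree_parent A j in
      if (i, j) \<in> A then (if (f i, f j) \<in> E then x (f i) (f j) else 0)
      else (if (f j, f i) \<in> E then x (f j) (f i) else 0))"

(* Probability that the random tree R = (R_0,...,R_m) in G according to T (arcs A) and x,
   with R_0 = v0, satisfies the property P.  The law of R is the product of the
   conditional transition probabilities. *)
definition random_tree_prob ::
  "nat set \<Rightarrow> (nat \<times> nat) set \<Rightarrow> (nat \<Rightarrow> nat \<Rightarrow> real) \<Rightarrow> nat \<Rightarrow> (nat \<times> nat) set \<Rightarrow> nat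
    \<Rightarrow> ((nat \<Rightarrow> nat) \<Rightarrow> bool) \<Rightarrow> real" where
  "random_tree_prob V E x m A v0 P =
     (\<Sum>f\<in>{f \<in> {0..m} \<rightarrow>\<^sub>E V. f 0 = v0 \<and> P f}. \<Prod>j\<in>{1..m}. rt_weight E x A f j)"

definition self_avoiding :: "nat \<Rightarrow> (nat \<Rightarrow> nat) \<Rightarrow> bool" where
  "self_avoiding m f \<longleftrightarrow> inj_on f {0..m}"

definition sets_expected :: "nat \<Rightarrow> nat set set \<Rightarrow> real \<Rightarrow> nat set \<Rightarrow> bool" where
  "sets_expected n \<S> a M \<longleftrightarrow>
     (\<forall>S\<in>\<S>. \<bar>real (card (M \<inter> S)) - real (card M) / real n * real (card S)\<bar> < a)"

definition c_expected ::
  "nat \<Rightarrow> nat set \<Rightarrow> (nat \<times> nat) set \<Rightarrow> (nat \<Rightarrow> nat \<Rightarrow> real) \<Rightarrow> real \<Rightarrow> nat set \<Rightarrow> bool" where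
  "c_expected n V E x c M \<longleftrightarrow>
     (\<forall>v\<in>V.
        \<bar>(\<Sum>w\<in>out_nbrs E v \<inter> M. x v w) - real (card M) / real n\<bar> < c \<and>
        \<bar>(\<Sum>w\<in>out_nbrs E v \<inter> M. x v w * log 2 (1 / x v w)) - real (card M) / real n * h_out E x v\<bar> < c \<and>
        \<bar>(\<Sum>w\<in>in_nbrs E v \<inter> M. x w v) - real (card M) / real n\<bar> < c \<and>
        \<bar>(\<Sum>w\<in>in_nbrs E v \<inter> M. x w v * log 2 (1 / x w v)) - real (card M) / real n * h_in E x v\<bar> < c)"

definition S_a_c_expected ::
  "nat \<Rightarrow> nat set \<Rightarrow> (nat \<times> nat) set \<Rightarrow> (nat \<Rightarrow> nat \<Rightarrow> real) \<Rightarrow> nat set set \<Rightarrow> real \<Rightarrow> real \<Rightarrow> nat set \<Rightarrow> bool" where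
  "S_a_c_expected n V E x \<S> a c M \<longleftrightarrow> sets_expected n \<S> a M \<and> c_expected n V E x c M"

end

theory Submission
  imports Defs "HOL-Analysis.Convex" "HOL-Real_Asymp.Real_Asymp"
begin

(* The random tree is a Markov chain indexed by T: R_j is drawn from a kernel K_j(R_(parent j), -)
   read off from x.  By b-normality every kernel entry is at most b/n, so each of the m^2 pairs
   R_i, R_j collides with probability at most b/n.  For the expectedness, fix h on V with
   oscillation at most 1.  As x is a perfect fractional matching the kernels are doubly
   stochastic, which centres the sample sum at (m + 1) times the mean of h; as neighbourhoods have
   size (1/2 + eps) n, any two rows of a kernel share mass at least theta = 2 eps / b.  Hence the conditional expectation of the sum of h over a subtree,
   given the value at its root j, oscillates by at most spread j = 1 + (1 - theta) * (sum of spread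
   over the children of j).  Using the degree bound Delta = exp (gamma sqrt (ln n)), a power-mean
   argument gives spread j <= (2 / theta) (m + 1)^alpha with alpha = 1 - theta / (4 gamma sqrt (ln n)),
   and summing out the tree leaf by leaf yields an Azuma-type exponential moment bound.  So a
   deviation of n^(1/4 - o(1)) from the mean has probability at most 1/n^3, and a union bound
   over the at most n^2 sets of S and the 4 n weighted neighbourhood sums finishes the proof. *)

lemma exp_le_quadratic:
  fixes t :: real
  assumes "\<bar>t\<bar> \<le> 1"
  shows "exp t \<le> 1 + t + t\<^sup>2"
proof (cases "0 \<le> t")
  case True
  then show ?thesis using exp_bound[of t] assms by simp
next
  case False
  define s where "s = - t"
  have s: "0 \<le> s" "s \<le> 1" using False assms by (auto simp: s_def)
  have "(1 - s + s\<^sup>2) * (1 + s + s\<^sup>2 / 2) * 2 = 2 + s\<^sup>2 + s ^ 3 + s ^ 4"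
    by (simp add: field_simps eval_nat_numeral)
  moreover have "0 \<le> s\<^sup>2 + s ^ 3 + s ^ 4" using s by simp
  ultimately have "1 \<le> (1 - s + s\<^sup>2) * (1 + s + s\<^sup>2 / 2)" by linarith
  also have "\<dots> \<le> (1 - s + s\<^sup>2) * exp s"
    using exp_lower_Taylor_quadratic[OF s(1)] s by (intro mult_left_mono) (auto simp: power2_eq_square)
  finally have "exp (- s) \<le> 1 - s + s\<^sup>2"
    by (simp add: exp_minus field_simps)
  then show ?thesis unfolding s_def by simp
qed

lemma concave_on_powr: "0 \<le> a \<Longrightarrow> a \<le> 1 \<Longrightarrow> concave_on {0<..} (\<lambda>x::real. x powr a)"
  by (intro f''_le0_imp_concave derivative_eq_intros | simp add: mult_nonpos_nonneg)+

lemma sum_powr_le: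
  fixes y :: "'a \<Rightarrow> real"
  assumes I: "finite I" and y: "\<And>i. i \<in> I \<Longrightarrow> 0 < y i" and a: "0 < a" "a \<le> 1"
  shows "(\<Sum>i\<in>I. y i powr a) \<le> real (card I) powr (1 - a) * (\<Sum>i\<in>I. y i) powr a"
proof (cases "I = {}")
  case False
  define k where "k = real (card I)"
  have k: "0 < k" unfolding k_def using I False by (simp add: card_gt_0_iff)
  have "(\<Sum>i\<in>I. (1/k) * y i powr a) \<le> (\<Sum>i\<in>I. (1/k) *\<^sub>R y i) powr a"
    using concave_on_sum[OF I False concave_on_powr[of a], of "\<lambda>_. 1/k" y] a y k
    by (auto simp: k_def)
  also have "\<dots> = (\<Sum>i\<in>I. y i) powr a / k powr a"
    using k y by (simp add: sum_divide_distrib[symmetric] powr_divide sum_nonneg less_imp_le)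
  finally have "(\<Sum>i\<in>I. y i powr a) / k \<le> (\<Sum>i\<in>I. y i) powr a / k powr a"
    by (simp add: sum_divide_distrib)
  then have "(\<Sum>i\<in>I. y i powr a) \<le> k * ((\<Sum>i\<in>I. y i) powr a / k powr a)"
    using k by (simp add: field_simps)
  also have "\<dots> = k powr (1 - a) * (\<Sum>i\<in>I. y i) powr a"
    using k by (simp add: powr_diff field_simps)
  finally show ?thesis unfolding k_def .
qed simp

section \<open>Tree-indexed Markov chains\<close>

locale tree_chain =
  fixes V :: "nat set" and K :: "nat \<Rightarrow> nat \<Rightarrow> nat \<Rightarrow> real" and parent :: "nat \<Rightarrow> nat"
    and m :: nat and v0 :: nat
  assumes finite_V: "finite V" and v0_in_V: "v0 \<in> V"
    and parent_less: "\<And>j. 1 \<le> j \<Longrightarrow> j \<le> m \<Longrightarrow> parent j < j"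
    and kernel_nonneg: "\<And>j u w. 1 \<le> j \<Longrightarrow> j \<le> m \<Longrightarrow> u \<in> V \<Longrightarrow> w \<in> V \<Longrightarrow> 0 \<le> K j u w"
    and kernel_row_sum: "\<And>j u. 1 \<le> j \<Longrightarrow> j \<le> m \<Longrightarrow> u \<in> V \<Longrightarrow> (\<Sum>w\<in>V. K j u w) = 1"
begin

text \<open>\<open>K j u w\<close> is the probability that \<open>R\<^sub>j = w\<close> given \<open>R\<^bsub>parent j\<^esub> = u\<close>; \<open>expect_prod k \<psi>\<close>
  is the expectation of \<open>\<Prod>j\<le>k. \<psi> j R\<^sub>j\<close> for the chain restricted to \<open>0, \<dots>, k\<close>.\<close>

definition configs :: "nat \<Rightarrow> (nat \<Rightarrow> nat) set" where
  "configs k = {f \<in> {0..k} \<rightarrow>\<^sub>E V. f 0 = v0}"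

definition weight :: "nat \<Rightarrow> (nat \<Rightarrow> nat) \<Rightarrow> real" where
  "weight k f = (\<Prod>j\<in>{1..k}. K j (f (parent j)) (f j))"

definition expect_prod :: "nat \<Rightarrow> (nat \<Rightarrow> nat \<Rightarrow> real) \<Rightarrow> real" where
  "expect_prod k \<psi> = (\<Sum>f\<in>configs k. weight k f * (\<Prod>j\<in>{0..k}. \<psi> j (f j)))"

definition kernel_mean :: "nat \<Rightarrow> (nat \<Rightarrow> real) \<Rightarrow> nat \<Rightarrow> real" where
  "kernel_mean j \<phi> u = (\<Sum>w\<in>V. K j u w * \<phi> w)"

definition prob :: "((nat \<Rightarrow> nat) \<Rightarrow> bool) \<Rightarrow> real" where
  "prob P = (\<Sum>f\<in>configs m. weight m f * of_bool (P f))"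

lemma finite_configs: "finite (configs k)"
proof -
  have "finite ({0..k} \<rightarrow>\<^sub>E V)" using finite_V by (intro finite_PiE) auto
  then show ?thesis unfolding configs_def by (rule finite_subset[rotated]) auto
qed

lemma configs_in_V: "f \<in> configs k \<Longrightarrow> j \<le> k \<Longrightarrow> f j \<in> V"
  unfolding configs_def by auto

lemma configs_0: "configs 0 = {(\<lambda>j. undefined)(0 := v0)}"
  unfolding configs_def using v0_in_V by (auto simp: PiE_def extensional_def fun_eq_iff)

lemma weight_nonneg: "k \<le> m \<Longrightarrow> f \<in> configs k \<Longrightarrow> 0 \<le> weight k f"
  unfolding weight_def
proof (intro prod_nonneg)
  fix j assume "k \<le> m" "f \<in> configs k" "j \<in> {1..k}"
  then show "0 \<le> K j (f (parent j)) (f j)"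
    using parent_less[of j] by (intro kernel_nonneg) (auto intro: configs_in_V)
qed

lemma sum_configs_Suc:
  "(\<Sum>f\<in>configs (Suc k). F f) = (\<Sum>g\<in>configs k. \<Sum>y\<in>V. F (g(Suc k := y)))"
proof -
  let ?ext = "\<lambda>(y, g). g(Suc k := y)"
  have "{0..Suc k} \<rightarrow>\<^sub>E V = ?ext ` (V \<times> ({0..k} \<rightarrow>\<^sub>E V))"
    unfolding atLeast0_atMost_Suc by (rule PiE_insert_eq)
  then have image: "configs (Suc k) = ?ext ` (V \<times> configs k)"
    unfolding configs_def by (auto simp: image_iff)
  have "inj_on ?ext (V \<times> ({0..k} \<rightarrow>\<^sub>E V))"
    using inj_combinator[of "Suc k" "{0..k}" "\<lambda>_. V"] by auto
  then have inj: "inj_on ?ext (V \<times> configs k)"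
    by (rule inj_on_subset) (auto simp: configs_def)
  have "(\<Sum>f\<in>configs (Suc k). F f) = (\<Sum>(y, g)\<in>V \<times> configs k. F (g(Suc k := y)))"
    unfolding image by (subst sum.reindex[OF inj]) (simp add: case_prod_unfold)
  also have "\<dots> = (\<Sum>g\<in>configs k. \<Sum>y\<in>V. F (g(Suc k := y)))"
    by (subst sum.cartesian_product[symmetric]) (rule sum.swap)
  finally show ?thesis .
qed

lemma weight_Suc:
  assumes "Suc k \<le> m" "g \<in> configs k"
  shows "weight (Suc k) (g(Suc k := y)) = weight k g * K (Suc k) (g (parent (Suc k))) y"
proof -
  have "parent (Suc k) < Suc k" using parent_less assms by auto
  then have "weight (Suc k) (g(Suc k := y))
      = (\<Prod>j\<in>{1..k}. K j ((g(Suc k := y)) (parent j)) ((g(Suc k := y)) j)) * K (Suc k) (g (parent (Suc k))) y"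
    unfolding weight_def by (simp add: prod.cl_ivl_Suc)
  also have "(\<Prod>j\<in>{1..k}. K j ((g(Suc k := y)) (parent j)) ((g(Suc k := y)) j)) = weight k g"
    unfolding weight_def using parent_less assms by (intro prod.cong) fastforce+
  finally show ?thesis .
qed

lemma prod_update_split:
  fixes \<psi> :: "nat \<Rightarrow> nat \<Rightarrow> real"
  assumes "i \<le> k"
  shows "(\<Prod>j\<in>{0..k}. (\<psi>(i := g)) j (f j)) = g (f i) * (\<Prod>j\<in>{0..k}-{i}. \<psi> j (f j))"
proof -
  have "(\<Prod>j\<in>{0..k}. (\<psi>(i := g)) j (f j)) = (\<psi>(i := g)) i (f i) * (\<Prod>j\<in>{0..k}-{i}. (\<psi>(i := g)) j (f j))"
    using assms by (intro prod.remove) auto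
  also have "(\<Prod>j\<in>{0..k}-{i}. (\<psi>(i := g)) j (f j)) = (\<Prod>j\<in>{0..k}-{i}. \<psi> j (f j))"
    by (rule prod.cong) auto
  finally show ?thesis by simp
qed

lemma expect_prod_Suc:
  assumes "Suc k \<le> m"
  shows "expect_prod (Suc k) \<psi>
    = expect_prod k (\<psi>(parent (Suc k) := (\<lambda>u. \<psi> (parent (Suc k)) u * kernel_mean (Suc k) (\<psi> (Suc k)) u)))"
proof -
  let ?i = "parent (Suc k)"
  have ik: "?i \<le> k" using parent_less[of "Suc k"] assms by auto
  have "expect_prod (Suc k) \<psi>
      = (\<Sum>g\<in>configs k. \<Sum>y\<in>V. weight (Suc k) (g(Suc k := y)) * (\<Prod>j\<in>{0..Suc k}. \<psi> j ((g(Suc k := y)) j)))"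
    unfolding expect_prod_def by (rule sum_configs_Suc)
  also have "\<dots> = (\<Sum>g\<in>configs k. weight k g * (\<psi> ?i (g ?i) * kernel_mean (Suc k) (\<psi> (Suc k)) (g ?i))
                     * (\<Prod>j\<in>{0..k}-{?i}. \<psi> j (g j)))"
  proof (rule sum.cong)
    fix g assume g: "g \<in> configs k"
    have split: "(\<Prod>j\<in>{0..k}. \<psi> j (g j)) = \<psi> ?i (g ?i) * (\<Prod>j\<in>{0..k}-{?i}. \<psi> j (g j))"
      using ik by (intro prod.remove) auto
    have last: "(\<Prod>j\<in>{0..Suc k}. \<psi> j ((g(Suc k := y)) j)) = (\<Prod>j\<in>{0..k}. \<psi> j (g j)) * \<psi> (Suc k) y"
      for y
    proof -
      have "(\<Prod>j\<in>{0..k}. \<psi> j ((g(Suc k := y)) j)) = (\<Prod>j\<in>{0..k}. \<psi> j (g j))"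
        by (rule prod.cong) auto
      then show ?thesis by (simp add: prod.cl_ivl_Suc)
    qed
    show "(\<Sum>y\<in>V. weight (Suc k) (g(Suc k := y)) * (\<Prod>j\<in>{0..Suc k}. \<psi> j ((g(Suc k := y)) j)))
        = weight k g * (\<psi> ?i (g ?i) * kernel_mean (Suc k) (\<psi> (Suc k)) (g ?i)) * (\<Prod>j\<in>{0..k}-{?i}. \<psi> j (g j))"
      unfolding weight_Suc[OF assms g] last split kernel_mean_def
      by (simp add: sum_distrib_left sum_distrib_right mult_ac)
  qed simp
  finally show ?thesis
    unfolding expect_prod_def prod_update_split[OF ik] by (simp add: mult_ac)
qed

lemma expect_prod_0: "expect_prod 0 \<psi> = \<psi> 0 v0"
  unfolding expect_prod_def configs_0 weight_def by simp

lemma expect_prod_cong: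
  "(\<And>j w. j \<le> k \<Longrightarrow> w \<in> V \<Longrightarrow> \<psi> j w = \<psi>' j w) \<Longrightarrow> expect_prod k \<psi> = expect_prod k \<psi>'"
  unfolding expect_prod_def by (intro sum.cong refl arg_cong2[where f="(*)"] prod.cong) (auto intro: configs_in_V)

lemma expect_prod_mono:
  assumes "k \<le> m" "\<And>j w. j \<le> k \<Longrightarrow> w \<in> V \<Longrightarrow> 0 \<le> \<psi> j w \<and> \<psi> j w \<le> \<psi>' j w"
  shows "expect_prod k \<psi> \<le> expect_prod k \<psi>'"
  unfolding expect_prod_def
proof (rule sum_mono)
  fix f assume f: "f \<in> configs k"
  have "(\<Prod>j\<in>{0..k}. \<psi> j (f j)) \<le> (\<Prod>j\<in>{0..k}. \<psi>' j (f j))"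
    by (rule prod_mono) (use assms f configs_in_V in auto)
  then show "weight k f * (\<Prod>j\<in>{0..k}. \<psi> j (f j)) \<le> weight k f * (\<Prod>j\<in>{0..k}. \<psi>' j (f j))"
    using weight_nonneg[OF assms(1) f] by (rule mult_left_mono)
qed

lemma expect_prod_scale:
  assumes "i \<le> k"
  shows "expect_prod k (\<psi>(i := (\<lambda>w. c * \<psi> i w))) = c * expect_prod k \<psi>"
proof -
  have "(\<Prod>j\<in>{0..k}. \<psi> j (f j)) = \<psi> i (f i) * (\<Prod>j\<in>{0..k}-{i}. \<psi> j (f j))" for f
    using prod_update_split[OF assms, of \<psi> "\<psi> i"] by simp
  then show ?thesis
    unfolding expect_prod_def sum_distrib_left prod_update_split[OF assms] by (simp add: mult_ac)
qed

lemma expect_prod_sum: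
  assumes "i \<le> k" "finite I"
  shows "(\<Sum>v\<in>I. expect_prod k (\<psi>(i := \<phi> v))) = expect_prod k (\<psi>(i := (\<lambda>w. \<Sum>v\<in>I. \<phi> v w)))"
  unfolding expect_prod_def prod_update_split[OF assms(1)]
  by (subst sum.swap) (simp add: sum_distrib_left sum_distrib_right algebra_simps)

lemma kernel_mean_const: "1 \<le> j \<Longrightarrow> j \<le> m \<Longrightarrow> u \<in> V \<Longrightarrow> kernel_mean j (\<lambda>_. c) u = c"
  unfolding kernel_mean_def using kernel_row_sum by (simp add: sum_distrib_right[symmetric])

lemma expect_prod_trailing_ones:
  assumes "k' \<le> k" "k \<le> m" "\<And>l w. k' < l \<Longrightarrow> l \<le> k \<Longrightarrow> w \<in> V \<Longrightarrow> \<psi> l w = 1"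
  shows "expect_prod k \<psi> = expect_prod k' \<psi>"
  using assms
proof (induction k)
  case (Suc k)
  show ?case
  proof (cases "k' = Suc k")
    case False
    then have "k' \<le> k" using Suc by simp
    have "expect_prod (Suc k) \<psi>
        = expect_prod k (\<psi>(parent (Suc k) := (\<lambda>u. \<psi> (parent (Suc k)) u * kernel_mean (Suc k) (\<psi> (Suc k)) u)))"
      using Suc.prems by (intro expect_prod_Suc) auto
    also have "\<dots> = expect_prod k \<psi>"
    proof (rule expect_prod_cong)
      fix j w assume "j \<le> k" "w \<in> V"
      have "kernel_mean (Suc k) (\<psi> (Suc k)) w = kernel_mean (Suc k) (\<lambda>_. 1) w"
        unfolding kernel_mean_def using Suc.prems \<open>k' \<le> k\<close> by (intro sum.cong) auto
      also have "\<dots> = 1" using Suc.prems \<open>w \<in> V\<close> by (intro kernel_mean_const) auto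
      finally show "(\<psi>(parent (Suc k) := (\<lambda>u. \<psi> (parent (Suc k)) u * kernel_mean (Suc k) (\<psi> (Suc k)) u))) j w
          = \<psi> j w"
        by simp
    qed
    also have "\<dots> = expect_prod k' \<psi>" using Suc \<open>k' \<le> k\<close> by auto
    finally show ?thesis .
  qed simp
qed simp

lemma expect_prod_one: "k \<le> m \<Longrightarrow> expect_prod k (\<lambda>_ _. 1) = 1"
  using expect_prod_trailing_ones[of 0 k "\<lambda>_ _. 1"] by (simp add: expect_prod_0)

lemma prob_True: "prob (\<lambda>_. True) = 1"
  using expect_prod_one[of m] unfolding prob_def expect_prod_def by simp

lemma prob_not: "prob (\<lambda>f. \<not> P f) = 1 - prob P"
proof -
  have "prob (\<lambda>f. \<not> P f) + prob P = prob (\<lambda>_. True)"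
    unfolding prob_def sum.distrib[symmetric] by (intro sum.cong) auto
  then show ?thesis using prob_True by simp
qed

lemma prob_mono: "(\<And>f. f \<in> configs m \<Longrightarrow> P f \<Longrightarrow> Q f) \<Longrightarrow> prob P \<le> prob Q"
  unfolding prob_def using weight_nonneg by (intro sum_mono mult_left_mono) auto

lemma prob_disj_le: "prob (\<lambda>f. P f \<or> Q f) \<le> prob P + prob Q"
  unfolding prob_def sum.distrib[symmetric] using weight_nonneg by (intro sum_mono) auto

lemma prob_bex_le: "finite I \<Longrightarrow> prob (\<lambda>f. \<exists>i\<in>I. P i f) \<le> (\<Sum>i\<in>I. prob (P i))"
proof (induction I rule: finite_induct)
  case empty
  then show ?case by (simp add: prob_def)
next
  case (insert a I)
  have "prob (\<lambda>f. \<exists>i\<in>insert a I. P i f) \<le> prob (P a) + prob (\<lambda>f. \<exists>i\<in>I. P i f)"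
    using prob_disj_le[of "P a"] by simp
  then show ?case using insert by simp
qed

lemma prob_collision_eq:
  assumes "i < j" "j \<le> m"
  shows "prob (\<lambda>f. f i = f j)
    = (\<Sum>v\<in>V. expect_prod m (\<lambda>l w. if l = i \<or> l = j then of_bool (w = v) else 1))"
proof -
  have "prob (\<lambda>f. f i = f j)
      = (\<Sum>f\<in>configs m. \<Sum>v\<in>V. weight m f * (\<Prod>l\<in>{0..m}. if l = i \<or> l = j then of_bool (f l = v) else 1))"
    unfolding prob_def
  proof (rule sum.cong)
    fix f assume f: "f \<in> configs m"
    have "{0..m} \<inter> {l. l = i \<or> l = j} = {i, j}" using assms by auto
    then have "(\<Prod>l\<in>{0..m}. if l = i \<or> l = j then of_bool (f l = v) else 1) = of_bool (f i = v) * (of_bool (f j = v) :: real)"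
      for v using assms by (subst prod.If_cases) auto
    moreover have "(\<Sum>v\<in>V. of_bool (f i = v) * (of_bool (f j = v) :: real)) = of_bool (f i = f j)"
      using configs_in_V[OF f, of i] assms finite_V by (simp add: of_bool_def if_distrib[of "\<lambda>x. x * _"] sum.delta' cong: if_cong)
    ultimately show "weight m f * of_bool (f i = f j)
        = (\<Sum>v\<in>V. weight m f * (\<Prod>l\<in>{0..m}. if l = i \<or> l = j then of_bool (f l = v) else 1))"
      by (simp add: sum_distrib_left[symmetric])
  qed simp
  also have "\<dots> = (\<Sum>v\<in>V. expect_prod m (\<lambda>l w. if l = i \<or> l = j then of_bool (w = v) else 1))"
    unfolding expect_prod_def by (rule sum.swap)
  finally show ?thesis .
qed

lemma prob_collision_le:
  assumes kernel_le: "\<And>j u w. 1 \<le> j \<Longrightarrow> j \<le> m \<Longrightarrow> u \<in> V \<Longrightarrow> w \<in> V \<Longrightarrow> K j u w \<le> c"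
    and ij: "i < j" "j \<le> m"
  shows "prob (\<lambda>f. f i = f j) \<le> c"
proof -
  obtain j' where j': "j = Suc j'" using ij by (cases j) auto
  define \<psi> where "\<psi> (v::nat) = (\<lambda>(l::nat) (w::nat). if l = i \<or> l = j then of_bool (w = v) else (1::real))" for v
  define \<chi> where "\<chi> (v::nat) = (\<lambda>(l::nat) (w::nat). if l = i then of_bool (w = v) else (1::real))" for v
  have pj: "parent j < j" using parent_less ij by auto
  have c_nonneg: "0 \<le> c" using kernel_le[of j v0 v0] kernel_nonneg[of j v0 v0] ij v0_in_V by auto
  have "expect_prod m (\<psi> v) \<le> c * expect_prod j' (\<chi> v)" if v: "v \<in> V" for v
  proof -
    have "expect_prod m (\<psi> v) = expect_prod j (\<psi> v)"
      using ij by (intro expect_prod_trailing_ones) (auto simp: \<psi>_def)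
    also have "\<dots> = expect_prod j' ((\<psi> v)(parent j := (\<lambda>u. \<psi> v (parent j) u * kernel_mean j (\<psi> v j) u)))"
      unfolding j' using ij j' by (intro expect_prod_Suc) auto
    also have "\<dots> \<le> expect_prod j' ((\<chi> v)(parent j := (\<lambda>u. c * \<chi> v (parent j) u)))"
    proof (rule expect_prod_mono)
      fix l w assume l: "l \<le> j'" and w: "w \<in> V"
      have "kernel_mean j (\<psi> v j) w = K j w v"
        unfolding kernel_mean_def \<psi>_def using v finite_V by (simp add: of_bool_def if_distrib[of "\<lambda>x. _ * x"] sum.delta' cong: if_cong)
      moreover have "0 \<le> K j w v" "K j w v \<le> c" using kernel_nonneg[of j w v] kernel_le[of j w v] ij v w by auto
      moreover have "\<psi> v (parent j) w = \<chi> v (parent j) w" "\<psi> v l w = \<chi> v l w"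
        using pj l j' unfolding \<psi>_def \<chi>_def by auto
      moreover have "0 \<le> \<chi> v l' w" "\<chi> v l' w \<le> 1" for l' unfolding \<chi>_def by auto
      ultimately show "0 \<le> ((\<psi> v)(parent j := (\<lambda>u. \<psi> v (parent j) u * kernel_mean j (\<psi> v j) u))) l w \<and>
          ((\<psi> v)(parent j := (\<lambda>u. \<psi> v (parent j) u * kernel_mean j (\<psi> v j) u))) l w
            \<le> ((\<chi> v)(parent j := (\<lambda>u. c * \<chi> v (parent j) u))) l w"
        using c_nonneg by (auto simp: mult_mono mult_right_mono mult.commute)
    qed (use ij j' in simp)
    also have "\<dots> = c * expect_prod j' (\<chi> v)"
      using pj j' by (intro expect_prod_scale) auto
    finally show ?thesis .
  qed
  then have "prob (\<lambda>f. f i = f j) \<le> (\<Sum>v\<in>V. c * expect_prod j' (\<chi> v))"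
    unfolding prob_collision_eq[OF ij] \<psi>_def[symmetric] by (rule sum_mono)
  also have "(\<Sum>v\<in>V. expect_prod j' (\<chi> v)) = 1"
  proof -
    have "(\<Sum>v\<in>V. expect_prod j' (\<chi> v)) = (\<Sum>v\<in>V. expect_prod j' ((\<lambda>_ _. 1)(i := (\<lambda>w. of_bool (w = v)))))"
      unfolding \<chi>_def by (intro sum.cong refl expect_prod_cong) auto
    also have "\<dots> = expect_prod j' ((\<lambda>_ _. 1)(i := (\<lambda>w. \<Sum>v\<in>V. of_bool (w = v))))"
      using ij j' finite_V by (intro expect_prod_sum) auto
    also have "\<dots> = expect_prod j' (\<lambda>_ _. 1)"
      using finite_V by (intro expect_prod_cong) auto
    finally show ?thesis using ij j' expect_prod_one by simp
  qed
  then have "(\<Sum>v\<in>V. c * expect_prod j' (\<chi> v)) = c" by (simp add: sum_distrib_left[symmetric])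
  finally show ?thesis .
qed

lemma prob_not_inj_le:
  assumes kernel_le: "\<And>j u w. 1 \<le> j \<Longrightarrow> j \<le> m \<Longrightarrow> u \<in> V \<Longrightarrow> w \<in> V \<Longrightarrow> K j u w \<le> c"
  shows "prob (\<lambda>f. \<not> inj_on f {0..m}) \<le> real m ^ 2 * c"
proof -
  have "prob (\<lambda>f. \<not> inj_on f {0..m}) \<le> prob (\<lambda>f. \<exists>j\<in>{1..m}. \<exists>i\<in>{0..<j}. f i = f j)"
  proof (rule prob_mono)
    fix f assume "\<not> inj_on f {0..m}"
    then obtain a b where "a \<in> {0..m}" "b \<in> {0..m}" "a < b" "f a = f b"
      unfolding inj_on_def by (metis linorder_neqE_nat)
    then show "\<exists>j\<in>{1..m}. \<exists>i\<in>{0..<j}. f i = f j" by force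
  qed
  also have "\<dots> \<le> (\<Sum>j\<in>{1..m}. prob (\<lambda>f. \<exists>i\<in>{0..<j}. f i = f j))"
    by (rule prob_bex_le) simp
  also have "\<dots> \<le> (\<Sum>j\<in>{1..m}. \<Sum>i\<in>{0..<j}. prob (\<lambda>f. f i = f j))"
    by (intro sum_mono prob_bex_le) simp
  also have "\<dots> \<le> (\<Sum>j\<in>{1..m}. \<Sum>i\<in>{0..<m}. c)"
  proof (intro sum_mono)
    fix j assume j: "j \<in> {1..m}"
    then have "0 \<le> c" using kernel_le[of 1 v0 v0] kernel_nonneg[of 1 v0 v0] v0_in_V by auto
    have "(\<Sum>i\<in>{0..<j}. prob (\<lambda>f. f i = f j)) \<le> (\<Sum>i\<in>{0..<j}. c)"
      using j by (intro sum_mono prob_collision_le[OF kernel_le]) auto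
    also have "\<dots> \<le> (\<Sum>i\<in>{0..<m}. c)" using j \<open>0 \<le> c\<close> by (simp add: mult_right_mono)
    finally show "(\<Sum>i\<in>{0..<j}. prob (\<lambda>f. f i = f j)) \<le> (\<Sum>i\<in>{0..<m}. c)" .
  qed
  also have "\<dots> = real m ^ 2 * c" by (simp add: power2_eq_square)
  finally show ?thesis .
qed

definition children :: "nat \<Rightarrow> nat set" where
  "children j = {c \<in> {1..m}. parent c = j \<and> j < c}"

lemma finite_children: "finite (children j)"
  unfolding children_def by auto

lemma children_D: "c \<in> children j \<Longrightarrow> j < c \<and> c \<le> m \<and> 1 \<le> c \<and> parent c = j"
  unfolding children_def by auto

lemma sum_children: "(\<Sum>j\<in>{0..m}. \<Sum>c\<in>children j. F c) = (\<Sum>c\<in>{1..m}. F c)"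
proof -
  have "children j = {c \<in> {1..m}. parent c = j}" for j
    unfolding children_def using parent_less by auto
  moreover have "parent ` {1..m} \<subseteq> {0..m}" using parent_less by force
  then have "(\<Sum>j\<in>{0..m}. sum F {c \<in> {1..m}. parent c = j}) = sum F {1..m}"
    by (intro sum.group) auto
  ultimately show ?thesis by simp
qed

text \<open>\<open>subtree_sum h j u\<close> is the conditional expectation of \<open>\<Sum>h(R\<^sub>i)\<close> over the subtree
  rooted at \<open>j\<close>, given \<open>R\<^sub>j = u\<close>.\<close>

function subtree_sum :: "(nat \<Rightarrow> real) \<Rightarrow> nat \<Rightarrow> nat \<Rightarrow> real" where
  "subtree_sum h j u = h u + (\<Sum>c\<in>children j. \<Sum>w\<in>V. K c u w * subtree_sum h c w)"
  by auto
termination by (relation "measure (\<lambda>(h, j, u). m - j)") (auto simp: children_def)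

declare subtree_sum.simps[simp del]

lemma subtree_sum_eq: "subtree_sum h j u = h u + (\<Sum>c\<in>children j. kernel_mean c (subtree_sum h c) u)"
  unfolding kernel_mean_def by (rule subtree_sum.simps)

text \<open>Induction over the frontiers \<open>{c \<ge> k. parent c < k}\<close>, whose \<open>q\<close>-sum is at most \<open>m + 1 - k\<close>.\<close>

lemma children_recursion_le:
  assumes q_nonneg: "\<And>j. 0 \<le> q j"
    and q_rec: "\<And>j. j \<le> m \<Longrightarrow> q j \<le> 1 + (\<Sum>c\<in>children j. q c)"
    and j: "j \<le> m"
  shows "q j \<le> real m + 1"
proof -
  define front where "front k = {c \<in> {k..m}. 1 \<le> c \<and> parent c < k}" for k
  have finite_front: "finite (front k)" for k unfolding front_def by auto
  have front_le: "(\<Sum>c\<in>front (m + 1 - d). q c) \<le> real d" if "d \<le> m" for d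
    using that
  proof (induction d)
    case 0
    have "front (m + 1) = {}" unfolding front_def by auto
    then show ?case by simp
  next
    case (Suc d)
    define k where "k = m - d"
    have k: "1 \<le> k" "k \<le> m" "m + 1 - Suc d = k" "m + 1 - d = Suc k" using Suc.prems by (auto simp: k_def)
    have front_k: "front k = insert k (front (Suc k) - children k)"
      unfolding front_def children_def using parent_less k by (auto simp: le_Suc_eq)
    have "children k \<subseteq> front (Suc k)" "k \<notin> front (Suc k) - children k"
      unfolding front_def children_def by auto
    then have "(\<Sum>c\<in>front k. q c) = q k + ((\<Sum>c\<in>front (Suc k). q c) - (\<Sum>c\<in>children k. q c))"
      unfolding front_k using finite_front by (simp add: sum_diff)
    also have "\<dots> \<le> 1 + real d" using q_rec[of k] k Suc by simp
    finally show ?case using k by simp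
  qed
  show ?thesis
  proof (cases "j = 0")
    case True
    have "(\<Sum>c\<in>children 0. q c) \<le> (\<Sum>c\<in>front 1. q c)"
      using q_nonneg finite_front by (intro sum_mono2) (auto simp: front_def children_def)
    then show ?thesis using q_rec[of 0] front_le[of m] True by simp
  next
    case False
    have "q j \<le> (\<Sum>c\<in>front j. q c)"
      using False j parent_less[of j] q_nonneg finite_front by (intro member_le_sum) (auto simp: front_def)
    also have "\<dots> \<le> real (m + 1 - j)" using front_le[of "m + 1 - j"] False j by simp
    finally show ?thesis by simp
  qed
qed

lemma prob_sum_ge_le_exp:
  assumes "0 \<le> l"
  shows "prob (\<lambda>f. a \<le> (\<Sum>j\<in>{0..m}. h (f j))) \<le> exp (- l * a) * expect_prod m (\<lambda>j w. exp (l * h w))"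
proof -
  have "of_bool (a \<le> (\<Sum>j\<in>{0..m}. h (f j))) \<le> exp (- l * a) * (\<Prod>j\<in>{0..m}. exp (l * h (f j)))" for f
  proof -
    have "of_bool (a \<le> (\<Sum>j\<in>{0..m}. h (f j))) \<le> exp (l * ((\<Sum>j\<in>{0..m}. h (f j)) - a))"
      using assms by (cases "a \<le> (\<Sum>j\<in>{0..m}. h (f j))") auto
    also have "\<dots> = exp (- l * a) * (\<Prod>j\<in>{0..m}. exp (l * h (f j)))"
      by (simp add: exp_sum[symmetric] exp_add[symmetric] sum_distrib_left algebra_simps)
    finally show ?thesis .
  qed
  then show ?thesis
    unfolding prob_def expect_prod_def sum_distrib_left using weight_nonneg
    by (intro sum_mono) (simp add: mult_left_mono mult.left_commute)
qed

end

section \<open>Concentration for kernels with overlapping rows\<close>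

definition concentration_threshold :: "real \<Rightarrow> real \<Rightarrow> nat \<Rightarrow> nat \<Rightarrow> real \<Rightarrow> bool" where
  "concentration_threshold \<theta> L m n t \<longleftrightarrow>
     2 * L \<le> t \<and> t \<le> real m + 1 \<and> 2 * exp (- (t\<^sup>2 * \<theta> / (16 * L * (real m + 1)))) \<le> 1 / real n ^ 3"

locale mixing_tree_chain = tree_chain +
  fixes \<theta> :: real
  assumes kernel_col_sum: "\<And>j w. 1 \<le> j \<Longrightarrow> j \<le> m \<Longrightarrow> w \<in> V \<Longrightarrow> (\<Sum>u\<in>V. K j u w) = 1"
    and kernel_overlap: "\<And>j u u'. 1 \<le> j \<Longrightarrow> j \<le> m \<Longrightarrow> u \<in> V \<Longrightarrow> u' \<in> V \<Longrightarrow> \<theta> \<le> (\<Sum>w\<in>V. min (K j u w) (K j u' w))"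
    and theta_pos: "0 < \<theta>" and theta_le_1: "\<theta> \<le> 1"
begin

text \<open>\<open>spread j\<close> bounds the oscillation of \<open>subtree_sum h j\<close> when \<open>h\<close> has oscillation at most \<open>1\<close>:
  every kernel contracts oscillations by the factor \<open>1 - \<theta>\<close>.\<close>

function spread :: "nat \<Rightarrow> real" where
  "spread j = 1 + (1 - \<theta>) * (\<Sum>c\<in>children j. spread c)"
  by auto
termination by (relation "measure (\<lambda>j. m - j)") (auto simp: children_def)

declare spread.simps[simp del]

lemma one_le_spread: "1 \<le> spread j"
proof (induction j rule: spread.induct)
  case (1 j)
  have "0 \<le> (\<Sum>c\<in>children j. spread c)" using 1 by (intro sum_nonneg) force
  then show ?case using theta_le_1 by (subst spread.simps) simp
qed

text \<open>Dobrushin's contraction: two rows of the kernel share mass at least \<open>\<theta>\<close>.\<close>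

lemma kernel_mean_diff_le:
  assumes j: "1 \<le> j" "j \<le> m" and u: "u \<in> V" "u' \<in> V"
    and spread: "\<And>w w'. w \<in> V \<Longrightarrow> w' \<in> V \<Longrightarrow> \<phi> w - \<phi> w' \<le> d"
  shows "kernel_mean j \<phi> u - kernel_mean j \<phi> u' \<le> (1 - \<theta>) * d"
proof -
  define common where "common w = min (K j u w) (K j u' w)" for w
  define hi where "hi = Max (\<phi> ` V)"
  define lo where "lo = Min (\<phi> ` V)"
  have "V \<noteq> {}" using v0_in_V by auto
  then have "hi \<in> \<phi> ` V" "lo \<in> \<phi> ` V" unfolding hi_def lo_def using finite_V by simp_all
  then have hi_lo: "0 \<le> hi - lo" "hi - lo \<le> d" unfolding hi_def lo_def using finite_V spread by auto
  have bounds: "\<And>w. w \<in> V \<Longrightarrow> lo \<le> \<phi> w \<and> \<phi> w \<le> hi" unfolding hi_def lo_def using finite_V by auto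
  have overlap: "\<theta> \<le> (\<Sum>w\<in>V. common w)" unfolding common_def using kernel_overlap j u by auto
  have row: "(\<Sum>w\<in>V. K j u w) = 1" "(\<Sum>w\<in>V. K j u' w) = 1" using kernel_row_sum j u by auto
  have "kernel_mean j \<phi> u - kernel_mean j \<phi> u'
      = (\<Sum>w\<in>V. (K j u w - common w) * \<phi> w) - (\<Sum>w\<in>V. (K j u' w - common w) * \<phi> w)"
    unfolding kernel_mean_def by (simp add: sum_subtractf[symmetric] algebra_simps)
  also have "\<dots> \<le> (\<Sum>w\<in>V. (K j u w - common w) * hi) - (\<Sum>w\<in>V. (K j u' w - common w) * lo)"
    using bounds by (intro diff_mono sum_mono mult_left_mono) (auto simp: common_def)
  also have "\<dots> = (1 - (\<Sum>w\<in>V. common w)) * (hi - lo)"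
    unfolding sum_distrib_right[symmetric] sum_subtractf row by (simp add: algebra_simps)
  also have "\<dots> \<le> (1 - \<theta>) * d"
    using overlap hi_lo theta_le_1 by (intro mult_mono) auto
  finally show ?thesis .
qed

lemma abs_diff_kernel_mean_le:
  assumes j: "1 \<le> j" "j \<le> m" and u: "u \<in> V" and w: "w \<in> V"
    and spread: "\<And>w w'. w \<in> V \<Longrightarrow> w' \<in> V \<Longrightarrow> \<phi> w - \<phi> w' \<le> d"
  shows "\<bar>\<phi> w - kernel_mean j \<phi> u\<bar> \<le> d"
proof -
  have row: "(\<Sum>w'\<in>V. K j u w') = 1" using kernel_row_sum j u by auto
  have K_nonneg: "\<And>w'. w' \<in> V \<Longrightarrow> 0 \<le> K j u w'" using kernel_nonneg j u by auto
  have "\<phi> w - kernel_mean j \<phi> u = (\<Sum>w'\<in>V. K j u w' * (\<phi> w - \<phi> w'))"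
    unfolding kernel_mean_def using row
    by (simp add: algebra_simps sum_subtractf sum_distrib_left[symmetric])
  also have "\<bar>\<dots>\<bar> \<le> (\<Sum>w'\<in>V. K j u w' * \<bar>\<phi> w - \<phi> w'\<bar>)"
    using K_nonneg by (auto intro: order_trans[OF sum_abs] simp: abs_mult)
  also have "\<dots> \<le> (\<Sum>w'\<in>V. K j u w' * d)"
    using spread w K_nonneg by (intro sum_mono mult_left_mono) (auto simp: abs_le_iff)
  also have "\<dots> = d" using row by (simp add: sum_distrib_right[symmetric])
  finally show ?thesis .
qed

text \<open>The exponential moment of one step, via \<open>exp t \<le> 1 + t + t\<^sup>2\<close> around the kernel mean.\<close>

lemma kernel_mean_exp_le:
  assumes j: "1 \<le> j" "j \<le> m" and u: "u \<in> V"
    and spread: "\<And>w w'. w \<in> V \<Longrightarrow> w' \<in> V \<Longrightarrow> \<phi> w - \<phi> w' \<le> d"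
    and l: "\<bar>l\<bar> * d \<le> 1"
  shows "kernel_mean j (\<lambda>w. exp (l * \<phi> w)) u \<le> exp (l * kernel_mean j \<phi> u + l\<^sup>2 * d\<^sup>2)"
proof -
  define c where "c = kernel_mean j \<phi> u"
  have row: "(\<Sum>w\<in>V. K j u w) = 1" using kernel_row_sum j u by auto
  have "exp (l * \<phi> w) \<le> exp (l * c) * (1 + l * (\<phi> w - c) + l\<^sup>2 * d\<^sup>2)" if w: "w \<in> V" for w
  proof -
    have "\<bar>l * (\<phi> w - c)\<bar> \<le> \<bar>l\<bar> * d"
      unfolding abs_mult c_def using abs_diff_kernel_mean_le[OF j u w spread] by (intro mult_left_mono) auto
    then have "exp (l * (\<phi> w - c)) \<le> 1 + l * (\<phi> w - c) + (l * (\<phi> w - c))\<^sup>2"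
      "(l * (\<phi> w - c))\<^sup>2 \<le> (\<bar>l\<bar> * d)\<^sup>2"
      using l by (auto intro: exp_le_quadratic simp flip: abs_le_square_iff)
    then have "exp (l * (\<phi> w - c)) \<le> 1 + l * (\<phi> w - c) + l\<^sup>2 * d\<^sup>2" by (simp add: power_mult_distrib)
    then have "exp (l * c) * exp (l * (\<phi> w - c)) \<le> exp (l * c) * (1 + l * (\<phi> w - c) + l\<^sup>2 * d\<^sup>2)"
      by (intro mult_left_mono) auto
    then show ?thesis by (simp add: algebra_simps flip: exp_add)
  qed
  then have "kernel_mean j (\<lambda>w. exp (l * \<phi> w)) u \<le> (\<Sum>w\<in>V. K j u w * (exp (l * c) * (1 + l * (\<phi> w - c) + l\<^sup>2 * d\<^sup>2)))"
    unfolding kernel_mean_def using kernel_nonneg j u by (intro sum_mono mult_left_mono) auto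
  also have "\<dots> = exp (l * c) * (\<Sum>w\<in>V. K j u w * (1 + l * (\<phi> w - c) + l\<^sup>2 * d\<^sup>2))"
    by (simp add: sum_distrib_left mult.left_commute)
  also have "(\<Sum>w\<in>V. K j u w * (1 + l * (\<phi> w - c) + l\<^sup>2 * d\<^sup>2)) = 1 + l\<^sup>2 * d\<^sup>2"
    using row unfolding c_def kernel_mean_def
    by (simp add: algebra_simps sum.distrib sum_subtractf sum_distrib_left[symmetric] sum_distrib_right[symmetric])
  also have "exp (l * c) * (1 + l\<^sup>2 * d\<^sup>2) \<le> exp (l * c + l\<^sup>2 * d\<^sup>2)"
    unfolding exp_add by (intro mult_left_mono) (auto simp: exp_ge_add_one_self)
  finally show ?thesis unfolding c_def .
qed

lemma subtree_sum_diff_le: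
  assumes h_spread: "\<And>u u'. u \<in> V \<Longrightarrow> u' \<in> V \<Longrightarrow> h u - h u' \<le> 1"
  shows "u \<in> V \<Longrightarrow> u' \<in> V \<Longrightarrow> subtree_sum h j u - subtree_sum h j u' \<le> spread j"
proof (induction j arbitrary: u u' rule: spread.induct)
  case (1 j)
  have "subtree_sum h j u - subtree_sum h j u' = (h u - h u') + (\<Sum>c\<in>children j. kernel_mean c (subtree_sum h c) u - kernel_mean c (subtree_sum h c) u')"
    by (simp add: subtree_sum_eq[of h j u] subtree_sum_eq[of h j u'] sum_subtractf)
  also have "\<dots> \<le> 1 + (\<Sum>c\<in>children j. (1 - \<theta>) * spread c)"
  proof (intro add_mono sum_mono)
    show "h u - h u' \<le> 1" using h_spread 1 by auto
    fix c assume c: "c \<in> children j"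
    show "kernel_mean c (subtree_sum h c) u - kernel_mean c (subtree_sum h c) u' \<le> (1 - \<theta>) * spread c"
      using children_D[OF c] 1 c by (intro kernel_mean_diff_le) auto
  qed
  also have "\<dots> = spread j" by (subst spread.simps[of j]) (simp add: sum_distrib_left)
  finally show ?case .
qed

lemma sum_subtree_sum_eq_0:
  assumes h_mean: "(\<Sum>u\<in>V. h u) = 0"
  shows "(\<Sum>u\<in>V. subtree_sum h j u) = 0"
proof (induction j rule: spread.induct)
  case (1 j)
  have "(\<Sum>u\<in>V. subtree_sum h j u) = (\<Sum>u\<in>V. h u) + (\<Sum>c\<in>children j. \<Sum>u\<in>V. \<Sum>w\<in>V. K c u w * subtree_sum h c w)"
    by (simp add: subtree_sum.simps[of h j] sum.distrib sum.swap[of _ V "children j"])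
  also have "(\<Sum>c\<in>children j. \<Sum>u\<in>V. \<Sum>w\<in>V. K c u w * subtree_sum h c w) = (\<Sum>c\<in>children j. \<Sum>w\<in>V. subtree_sum h c w)"
  proof (rule sum.cong)
    fix c assume c: "c \<in> children j"
    have "(\<Sum>u\<in>V. \<Sum>w\<in>V. K c u w * subtree_sum h c w) = (\<Sum>w\<in>V. (\<Sum>u\<in>V. K c u w) * subtree_sum h c w)"
      by (subst sum.swap) (simp add: sum_distrib_right)
    also have "\<dots> = (\<Sum>w\<in>V. subtree_sum h c w)" using kernel_col_sum children_D[OF c] by simp
    finally show "(\<Sum>u\<in>V. \<Sum>w\<in>V. K c u w * subtree_sum h c w) = (\<Sum>w\<in>V. subtree_sum h c w)" .
  qed simp
  also have "\<dots> = 0" using 1 by simp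
  finally show ?case using h_mean by simp
qed

lemma subtree_sum_root_le:
  assumes h_spread: "\<And>u u'. u \<in> V \<Longrightarrow> u' \<in> V \<Longrightarrow> h u - h u' \<le> 1" and h_mean: "(\<Sum>u\<in>V. h u) = 0"
  shows "subtree_sum h 0 v0 \<le> spread 0"
proof -
  have "\<exists>u\<in>V. subtree_sum h 0 u \<le> 0"
  proof (rule ccontr)
    assume "\<not> ?thesis"
    then have "\<forall>u\<in>V. 0 < subtree_sum h 0 u" by auto
    then have "0 < (\<Sum>u\<in>V. subtree_sum h 0 u)" using v0_in_V finite_V by (intro sum_pos) auto
    then show False using sum_subtree_sum_eq_0[OF h_mean] by simp
  qed
  then obtain u where u: "u \<in> V" "subtree_sum h 0 u \<le> 0" by auto
  have "subtree_sum h 0 v0 - subtree_sum h 0 u \<le> spread 0" using subtree_sum_diff_le[where h=h, OF h_spread] v0_in_V u(1) by blast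
  then show ?thesis using u by simp
qed

lemma sum_spread_le: "(\<Sum>c\<in>{1..m}. spread c) \<le> (real m + 1) / \<theta>"
proof -
  have "(\<Sum>j\<in>{0..m}. spread j) = (\<Sum>j\<in>{0..m}. 1 + (1 - \<theta>) * (\<Sum>c\<in>children j. spread c))"
    by (intro sum.cong refl) (subst spread.simps, simp)
  also have "\<dots> = (real m + 1) + (1 - \<theta>) * (\<Sum>c\<in>{1..m}. spread c)"
    by (simp add: sum.distrib sum_distrib_left[symmetric] sum_children)
  finally have e: "(\<Sum>j\<in>{0..m}. spread j) = (real m + 1) + (1 - \<theta>) * (\<Sum>c\<in>{1..m}. spread c)" .
  have "(\<Sum>j\<in>{0..m}. spread j) = spread 0 + (\<Sum>c\<in>{1..m}. spread c)"
    by (simp add: sum.atLeast_Suc_atMost)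
  then have "\<theta> * (\<Sum>c\<in>{1..m}. spread c) = real m + 1 - spread 0" using e by (simp add: algebra_simps)
  then have "\<theta> * (\<Sum>c\<in>{1..m}. spread c) \<le> real m + 1" using one_le_spread[of 0] by simp
  then show ?thesis using theta_pos by (simp add: field_simps)
qed

lemma spread_powr_recursion:
  assumes deg: "real (card (children j)) \<le> \<Delta>" and \<alpha>: "0 < \<alpha>" "\<alpha> \<le> 1"
    and \<Delta>: "\<Delta> powr (1 - \<alpha>) * (1 - \<theta>) \<le> 1 - \<theta> / 2"
  shows "(\<theta> / 2 * spread j) powr (1 / \<alpha>) \<le> 1 + (\<Sum>c\<in>children j. (\<theta> / 2 * spread c) powr (1 / \<alpha>))"
proof -
  define q where "q j = (\<theta> / 2 * spread j) powr (1 / \<alpha>)" for j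
  have q_pos: "0 < q j" for j unfolding q_def using one_le_spread[of j] theta_pos by simp
  have q_powr: "q j powr \<alpha> = \<theta> / 2 * spread j" for j
    unfolding q_def using one_le_spread[of j] theta_pos \<alpha> by (simp add: powr_powr)
  define Q where "Q = (\<Sum>c\<in>children j. q c)"
  have Q_nonneg: "0 \<le> Q" unfolding Q_def using q_pos by (intro sum_nonneg) (auto intro: less_imp_le)
  have "(\<Sum>c\<in>children j. q c powr \<alpha>) \<le> real (card (children j)) powr (1 - \<alpha>) * Q powr \<alpha>"
    unfolding Q_def using finite_children q_pos \<alpha> by (intro sum_powr_le) auto
  also have "\<dots> \<le> \<Delta> powr (1 - \<alpha>) * Q powr \<alpha>"
    using deg \<alpha> by (intro mult_right_mono powr_mono2) auto
  finally have power_mean: "(\<Sum>c\<in>children j. q c powr \<alpha>) \<le> \<Delta> powr (1 - \<alpha>) * Q powr \<alpha>" .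
  have "(\<Sum>c\<in>children j. q c powr \<alpha>) = \<theta> / 2 * (\<Sum>c\<in>children j. spread c)"
    unfolding q_powr by (simp add: sum_distrib_left)
  then have "\<theta> / 2 * spread j = \<theta> / 2 + (1 - \<theta>) * (\<Sum>c\<in>children j. q c powr \<alpha>)"
    by (subst spread.simps[of j]) (simp add: field_simps)
  also have "\<dots> \<le> \<theta> / 2 + (\<Delta> powr (1 - \<alpha>) * (1 - \<theta>)) * Q powr \<alpha>"
    using mult_left_mono[OF power_mean, of "1 - \<theta>"] theta_le_1 by (simp add: mult_ac)
  also have "\<dots> \<le> \<theta> / 2 * (1 + Q) powr \<alpha> + (1 - \<theta> / 2) * (1 + Q) powr \<alpha>"
    using \<Delta> theta_pos theta_le_1 Q_nonneg \<alpha> ge_one_powr_ge_zero[of "1 + Q" \<alpha>]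
    by (intro add_mono mult_mono powr_mono2) auto
  finally have "\<theta> / 2 * spread j \<le> (1 + Q) powr \<alpha>"
    by (simp add: ring_distribs)
  then have "q j \<le> ((1 + Q) powr \<alpha>) powr (1 / \<alpha>)"
    unfolding q_def using one_le_spread[of j] theta_pos \<alpha> by (intro powr_mono2) auto
  also have "\<dots> = 1 + Q" using Q_nonneg \<alpha> by (simp add: powr_powr)
  finally show ?thesis unfolding Q_def q_def .
qed

lemma spread_le:
  assumes deg: "\<And>j. j \<le> m \<Longrightarrow> real (card (children j)) \<le> \<Delta>" and \<alpha>: "0 < \<alpha>" "\<alpha> \<le> 1"
    and \<Delta>: "\<Delta> powr (1 - \<alpha>) * (1 - \<theta>) \<le> 1 - \<theta> / 2"
    and j: "j \<le> m"
  shows "spread j \<le> (2 / \<theta>) * (real m + 1) powr \<alpha>"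
proof -
  have "(\<theta> / 2 * spread j) powr (1 / \<alpha>) \<le> real m + 1"
    using spread_powr_recursion[OF deg \<alpha> \<Delta>] j by (intro children_recursion_le) auto
  then have "((\<theta> / 2 * spread j) powr (1 / \<alpha>)) powr \<alpha> \<le> (real m + 1) powr \<alpha>"
    using \<alpha> by (intro powr_mono2) auto
  then have "\<theta> / 2 * spread j \<le> (real m + 1) powr \<alpha>"
    using one_le_spread[of j] theta_pos \<alpha> by (simp add: powr_powr)
  then show ?thesis using theta_pos by (simp add: field_simps)
qed
text \<open>\<open>partial_subtree_sum h k j u\<close> is \<open>h u\<close> plus the conditional expectations of the subtrees
  of those children of \<open>j\<close> that lie beyond \<open>k\<close>: these are the factors left after summing out
  the vertices beyond \<open>k\<close>.\<close>

definition partial_subtree_sum :: "(nat \<Rightarrow> real) \<Rightarrow> nat \<Rightarrow> nat \<Rightarrow> nat \<Rightarrow> real" where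
  "partial_subtree_sum h k j u = h u + (\<Sum>c\<in>{c \<in> children j. k < c}. kernel_mean c (subtree_sum h c) u)"

lemma expect_prod_exp_partial_Suc_le:
  assumes h_spread: "\<And>u u'. u \<in> V \<Longrightarrow> u' \<in> V \<Longrightarrow> h u - h u' \<le> 1"
    and l: "\<bar>l\<bar> * spread (Suc n) \<le> 1" and Suc: "Suc n \<le> m"
  shows "expect_prod (Suc n) (\<lambda>j w. exp (l * partial_subtree_sum h (Suc n) j w))
    \<le> exp (l\<^sup>2 * (spread (Suc n))\<^sup>2) * expect_prod n (\<lambda>j w. exp (l * partial_subtree_sum h n j w))"
proof -
  let ?k = "Suc n"
  let ?i = "parent ?k"
  define \<psi> where "\<psi> k = (\<lambda>j w. exp (l * partial_subtree_sum h k j w))" for k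
  have i: "?i < ?k" "?k \<in> children ?i" using parent_less Suc unfolding children_def by auto
  have "{c \<in> children ?k. ?k < c} = children ?k" by (auto dest: children_D)
  then have last_factor: "\<psi> ?k ?k = (\<lambda>w. exp (l * subtree_sum h ?k w))"
    unfolding \<psi>_def partial_subtree_sum_def by (simp add: subtree_sum_eq[of h ?k])
  have children_beyond: "{c \<in> children ?i. n < c} = insert ?k {c \<in> children ?i. ?k < c}"
    using i by auto
  have parent_factor: "partial_subtree_sum h n ?i w
      = partial_subtree_sum h ?k ?i w + kernel_mean ?k (subtree_sum h ?k) w" for w
    unfolding partial_subtree_sum_def children_beyond using finite_children by (subst sum.insert) auto
  have other_factors: "partial_subtree_sum h ?k j w = partial_subtree_sum h n j w" if "j \<noteq> ?i" for j w
  proof -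
    have "{c \<in> children j. n < c} = {c \<in> children j. ?k < c}"
      using that by (auto simp: children_def) (metis Suc_lessI)
    then show ?thesis unfolding partial_subtree_sum_def by simp
  qed
  have "kernel_mean ?k (\<psi> ?k ?k) w \<le> exp (l * kernel_mean ?k (subtree_sum h ?k) w + l\<^sup>2 * (spread ?k)\<^sup>2)"
    if "w \<in> V" for w
    unfolding last_factor using Suc that l subtree_sum_diff_le[OF h_spread]
    by (intro kernel_mean_exp_le) auto
  then have "\<psi> ?k ?i w * kernel_mean ?k (\<psi> ?k ?k) w
      \<le> \<psi> ?k ?i w * exp (l * kernel_mean ?k (subtree_sum h ?k) w + l\<^sup>2 * (spread ?k)\<^sup>2)"
    if "w \<in> V" for w
    using that by (intro mult_left_mono) (auto simp: \<psi>_def)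
  also have "\<psi> ?k ?i w * exp (l * kernel_mean ?k (subtree_sum h ?k) w + l\<^sup>2 * (spread ?k)\<^sup>2)
      = exp (l\<^sup>2 * (spread ?k)\<^sup>2) * \<psi> n ?i w" for w
    unfolding \<psi>_def parent_factor by (simp add: algebra_simps flip: exp_add)
  finally have last_step: "\<psi> ?k ?i w * kernel_mean ?k (\<psi> ?k ?k) w \<le> exp (l\<^sup>2 * (spread ?k)\<^sup>2) * \<psi> n ?i w"
    if "w \<in> V" for w
    using that .
  have "expect_prod ?k (\<psi> ?k)
      = expect_prod n ((\<psi> ?k)(?i := (\<lambda>u. \<psi> ?k ?i u * kernel_mean ?k (\<psi> ?k ?k) u)))"
    using Suc by (intro expect_prod_Suc) auto
  also have "\<dots> \<le> expect_prod n ((\<psi> n)(?i := (\<lambda>u. exp (l\<^sup>2 * (spread ?k)\<^sup>2) * \<psi> n ?i u)))"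
  proof (rule expect_prod_mono)
    fix j w assume "j \<le> n" "w \<in> V"
    moreover have "0 \<le> kernel_mean ?k (\<psi> ?k ?k) w"
      unfolding kernel_mean_def \<psi>_def using kernel_nonneg Suc \<open>w \<in> V\<close> by (intro sum_nonneg) auto
    ultimately show "0 \<le> ((\<psi> ?k)(?i := (\<lambda>u. \<psi> ?k ?i u * kernel_mean ?k (\<psi> ?k ?k) u))) j w \<and>
      ((\<psi> ?k)(?i := (\<lambda>u. \<psi> ?k ?i u * kernel_mean ?k (\<psi> ?k ?k) u))) j w
        \<le> ((\<psi> n)(?i := (\<lambda>u. exp (l\<^sup>2 * (spread ?k)\<^sup>2) * \<psi> n ?i u))) j w"
      using last_step other_factors by (auto simp: \<psi>_def)
  qed (use Suc in simp)
  also have "\<dots> = exp (l\<^sup>2 * (spread ?k)\<^sup>2) * expect_prod n (\<psi> n)"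
    using i by (intro expect_prod_scale) auto
  finally show ?thesis unfolding \<psi>_def .
qed

lemma expect_prod_exp_le:
  assumes h_spread: "\<And>u u'. u \<in> V \<Longrightarrow> u' \<in> V \<Longrightarrow> h u - h u' \<le> 1"
    and l_spread: "\<And>c. 1 \<le> c \<Longrightarrow> c \<le> m \<Longrightarrow> \<bar>l\<bar> * spread c \<le> 1"
    and k: "k \<le> m"
  shows "expect_prod m (\<lambda>j w. exp (l * h w))
    \<le> exp (l\<^sup>2 * (\<Sum>c\<in>{k<..m}. (spread c)\<^sup>2)) * expect_prod k (\<lambda>j w. exp (l * partial_subtree_sum h k j w))"
  using k
proof (induction rule: inc_induct)
  case base
  have "{c \<in> children j. m < c} = {}" for j by (auto dest: children_D)
  then have "partial_subtree_sum h m j w = h w" for j w unfolding partial_subtree_sum_def by (simp only: sum.empty)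
  then show ?case by simp
next
  case (step n)
  have "{n<..m} = insert (Suc n) {Suc n<..m}" using step by auto
  then have "exp (l\<^sup>2 * (\<Sum>c\<in>{n<..m}. (spread c)\<^sup>2))
      = exp (l\<^sup>2 * (\<Sum>c\<in>{Suc n<..m}. (spread c)\<^sup>2)) * exp (l\<^sup>2 * (spread (Suc n))\<^sup>2)"
    by (simp add: algebra_simps exp_add[symmetric])
  moreover have "expect_prod (Suc n) (\<lambda>j w. exp (l * partial_subtree_sum h (Suc n) j w))
      \<le> exp (l\<^sup>2 * (spread (Suc n))\<^sup>2) * expect_prod n (\<lambda>j w. exp (l * partial_subtree_sum h n j w))"
    using step.hyps l_spread[of "Suc n"] by (intro expect_prod_exp_partial_Suc_le[OF h_spread]) auto
  ultimately show ?case
    using step.IH by (smt (verit) exp_gt_zero mult_left_mono mult.assoc)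
qed

lemma exp_moment_le:
  assumes h_spread: "\<And>u u'. u \<in> V \<Longrightarrow> u' \<in> V \<Longrightarrow> h u - h u' \<le> 1"
    and l_spread: "\<And>c. 1 \<le> c \<Longrightarrow> c \<le> m \<Longrightarrow> \<bar>l\<bar> * spread c \<le> 1"
  shows "expect_prod m (\<lambda>j w. exp (l * h w)) \<le> exp (l\<^sup>2 * (\<Sum>c\<in>{1..m}. (spread c)\<^sup>2) + l * subtree_sum h 0 v0)"
proof -
  have "expect_prod m (\<lambda>j w. exp (l * h w)) \<le> exp (l\<^sup>2 * (\<Sum>c\<in>{0<..m}. (spread c)\<^sup>2)) * expect_prod 0 (\<lambda>j w. exp (l * partial_subtree_sum h 0 j w))"
    using expect_prod_exp_le[OF h_spread l_spread] by simp
  also have "expect_prod 0 (\<lambda>j w. exp (l * partial_subtree_sum h 0 j w)) = exp (l * subtree_sum h 0 v0)"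
  proof -
    have "{c \<in> children 0. 0 < c} = children 0" by (auto dest: children_D)
    then show ?thesis unfolding expect_prod_0 partial_subtree_sum_def by (simp add: subtree_sum_eq[of h 0 v0])
  qed
  also have "{0<..m} = {1..m}" by auto
  finally show ?thesis by (simp add: exp_add)
qed

lemma prob_sum_ge_le:
  assumes h_spread: "\<And>u u'. u \<in> V \<Longrightarrow> u' \<in> V \<Longrightarrow> h u - h u' \<le> 1"
    and h_mean: "(\<Sum>u\<in>V. h u) = 0"
    and L: "\<And>c. c \<le> m \<Longrightarrow> spread c \<le> L"
    and aL: "2 * L \<le> a" and am: "a \<le> real m + 1"
  shows "prob (\<lambda>f. a \<le> (\<Sum>j\<in>{0..m}. h (f j))) \<le> exp (- (a\<^sup>2 * \<theta> / (16 * L * (real m + 1))))"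
proof -
  define M where "M = real m + 1"
  have L1: "1 \<le> L" using L[of 0] one_le_spread[of 0] by simp
  have M1: "1 \<le> M" unfolding M_def by simp
  define l where "l = a * \<theta> / (4 * L * M)"
  have l_nonneg: "0 \<le> l" unfolding l_def using aL theta_pos L1 M1 by simp
  have "l * L = a * \<theta> / (4 * M)" unfolding l_def using L1 by (simp add: field_simps)
  also have "\<dots> \<le> 1"
    using mult_mono[of a M \<theta> 1] am theta_le_1 theta_pos aL L1 M1 by (simp add: M_def field_simps)
  finally have "l * L \<le> 1" .
  then have l_spread: "\<bar>l\<bar> * spread c \<le> 1" if "c \<le> m" for c
    using mult_left_mono[OF L[OF that] l_nonneg] l_nonneg by simp
  have "(\<Sum>c\<in>{1..m}. (spread c)\<^sup>2) \<le> (\<Sum>c\<in>{1..m}. L * spread c)"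
    using L one_le_spread by (intro sum_mono) (simp add: power2_eq_square mult_right_mono less_le_trans[OF zero_less_one])
  also have "\<dots> \<le> L * (M / \<theta>)"
    using sum_spread_le L1 unfolding M_def sum_distrib_left[symmetric] by (intro mult_left_mono) auto
  finally have spread_squares: "l\<^sup>2 * (\<Sum>c\<in>{1..m}. (spread c)\<^sup>2) \<le> l\<^sup>2 * (L * (M / \<theta>))"
    by (intro mult_left_mono) auto
  have "l * subtree_sum h 0 v0 \<le> l * (a / 2)"
    using subtree_sum_root_le[OF h_spread h_mean] L[of 0] aL l_nonneg by (intro mult_left_mono) auto
  then have "- l * a + (l\<^sup>2 * (\<Sum>c\<in>{1..m}. (spread c)\<^sup>2) + l * subtree_sum h 0 v0)
      \<le> - l * a + l\<^sup>2 * (L * (M / \<theta>)) + l * (a / 2)"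
    using spread_squares by linarith
  also have "\<dots> = - (a\<^sup>2 * \<theta> / (16 * L * M))"
    unfolding l_def using theta_pos L1 M1 by (simp add: field_simps power2_eq_square)
  finally have exponent: "- l * a + (l\<^sup>2 * (\<Sum>c\<in>{1..m}. (spread c)\<^sup>2) + l * subtree_sum h 0 v0)
      \<le> - (a\<^sup>2 * \<theta> / (16 * L * M))" .
  have "prob (\<lambda>f. a \<le> (\<Sum>j\<in>{0..m}. h (f j))) \<le> exp (- l * a) * expect_prod m (\<lambda>j w. exp (l * h w))"
    using l_nonneg by (rule prob_sum_ge_le_exp)
  also have "\<dots> \<le> exp (- l * a) * exp (l\<^sup>2 * (\<Sum>c\<in>{1..m}. (spread c)\<^sup>2) + l * subtree_sum h 0 v0)"
    using exp_moment_le[OF h_spread] l_spread by (intro mult_left_mono) auto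
  also have "\<dots> \<le> exp (- (a\<^sup>2 * \<theta> / (16 * L * M)))"
    using exponent by (simp flip: exp_add)
  finally show ?thesis unfolding M_def .
qed

lemma prob_abs_sum_ge_le:
  assumes h_spread: "\<And>u u'. u \<in> V \<Longrightarrow> u' \<in> V \<Longrightarrow> h u - h u' \<le> 1"
    and h_mean: "(\<Sum>u\<in>V. h u) = 0"
    and L: "\<And>c. c \<le> m \<Longrightarrow> spread c \<le> L"
    and aL: "2 * L \<le> a" and am: "a \<le> real m + 1"
  shows "prob (\<lambda>f. a \<le> \<bar>\<Sum>j\<in>{0..m}. h (f j)\<bar>) \<le> 2 * exp (- (a\<^sup>2 * \<theta> / (16 * L * (real m + 1))))"
proof -
  have h_spread': "\<And>u u'. u \<in> V \<Longrightarrow> u' \<in> V \<Longrightarrow> (- h u) - (- h u') \<le> 1" using h_spread by force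
  have h_mean': "(\<Sum>u\<in>V. - h u) = 0" using h_mean by (simp add: sum_negf)
  have "prob (\<lambda>f. a \<le> \<bar>\<Sum>j\<in>{0..m}. h (f j)\<bar>) \<le> prob (\<lambda>f. a \<le> (\<Sum>j\<in>{0..m}. h (f j)) \<or> a \<le> (\<Sum>j\<in>{0..m}. - h (f j)))"
  proof (rule prob_mono)
    fix f assume a: "a \<le> \<bar>\<Sum>j\<in>{0..m}. h (f j)\<bar>"
    have n: "(\<Sum>j\<in>{0..m}. - h (f j)) = - (\<Sum>j\<in>{0..m}. h (f j))" by (rule sum_negf)
    show "a \<le> (\<Sum>j\<in>{0..m}. h (f j)) \<or> a \<le> (\<Sum>j\<in>{0..m}. - h (f j))"
      unfolding n using a by (cases "0 \<le> (\<Sum>j\<in>{0..m}. h (f j))") (simp_all add: abs_if)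
  qed
  also have "\<dots> \<le> prob (\<lambda>f. a \<le> (\<Sum>j\<in>{0..m}. h (f j))) + prob (\<lambda>f. a \<le> (\<Sum>j\<in>{0..m}. - h (f j)))"
    by (rule prob_disj_le)
  also have "\<dots> \<le> exp (- (a\<^sup>2 * \<theta> / (16 * L * (real m + 1)))) + exp (- (a\<^sup>2 * \<theta> / (16 * L * (real m + 1))))"
    using prob_sum_ge_le[OF h_spread h_mean L aL am] prob_sum_ge_le[where h="\<lambda>u. - h u", OF h_spread' h_mean' L aL am] by (intro add_mono)
  finally show ?thesis by simp
qed
lemma prob_deviation_le:
  assumes g: "\<And>w. w \<in> V \<Longrightarrow> 0 \<le> g w \<and> g w \<le> B" and B: "0 < B"
    and L: "\<And>c. c \<le> m \<Longrightarrow> spread c \<le> L"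
    and t: "concentration_threshold \<theta> L m (card V) (t / B)"
  shows "prob (\<lambda>f. t \<le> \<bar>(\<Sum>j\<in>{0..m}. g (f j)) - (real m + 1) * (\<Sum>w\<in>V. g w) / card V\<bar>)
    \<le> 1 / real (card V) ^ 3"
proof -
  define N where "N = real (card V)"
  have N: "0 < N" unfolding N_def using finite_V v0_in_V card_gt_0_iff by fastforce
  define \<mu> where "\<mu> = (\<Sum>w\<in>V. g w) / N"
  define h where "h w = (g w - \<mu>) / B" for w
  have h_spread: "h u - h u' \<le> 1" if "u \<in> V" "u' \<in> V" for u u'
  proof -
    have "h u - h u' = (g u - g u') / B" unfolding h_def by (simp add: diff_divide_distrib)
    also have "\<dots> \<le> B / B" using g[OF that(1)] g[OF that(2)] B by (intro divide_right_mono) auto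
    finally show ?thesis using B by simp
  qed
  have "(\<Sum>u\<in>V. h u) = ((\<Sum>u\<in>V. g u) - N * \<mu>) / B"
    unfolding h_def N_def by (simp add: sum_divide_distrib[symmetric] sum_subtractf)
  then have h_mean: "(\<Sum>u\<in>V. h u) = 0" unfolding \<mu>_def using N by simp
  have "\<bar>\<Sum>j\<in>{0..m}. h (f j)\<bar> = \<bar>(\<Sum>j\<in>{0..m}. g (f j)) - (real m + 1) * (\<Sum>w\<in>V. g w) / N\<bar> / B" for f
    unfolding h_def \<mu>_def using B by (simp add: sum_divide_distrib[symmetric] sum_subtractf add.commute)
  then have "prob (\<lambda>f. t \<le> \<bar>(\<Sum>j\<in>{0..m}. g (f j)) - (real m + 1) * (\<Sum>w\<in>V. g w) / N\<bar>)
      \<le> prob (\<lambda>f. t / B \<le> \<bar>\<Sum>j\<in>{0..m}. h (f j)\<bar>)"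
    using B by (intro prob_mono) (simp add: divide_right_mono)
  also have "\<dots> \<le> 2 * exp (- ((t / B)\<^sup>2 * \<theta> / (16 * L * (real m + 1))))"
    using t unfolding concentration_threshold_def by (intro prob_abs_sum_ge_le[OF h_spread h_mean L]) auto
  also have "\<dots> \<le> 1 / N ^ 3" using t unfolding concentration_threshold_def N_def by simp
  finally show ?thesis unfolding N_def .
qed

end

section \<open>Random trees in dense digraphs\<close>

lemma (in tree_chain) prob_eq_sum: "prob P = (\<Sum>f\<in>{f \<in> {0..m} \<rightarrow>\<^sub>E V. f 0 = v0 \<and> P f}. weight m f)"
proof -
  have "{f \<in> {0..m} \<rightarrow>\<^sub>E V. f 0 = v0 \<and> P f} = {f \<in> configs m. P f}"
    unfolding configs_def by auto
  then show ?thesis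
    unfolding prob_def using finite_configs by (simp add: sum.inter_filter sum.inter_restrict if_distrib[of "(*) _"] cong: if_cong)
qed

definition arc_kernel ::
  "(nat \<times> nat) set \<Rightarrow> (nat \<Rightarrow> nat \<Rightarrow> real) \<Rightarrow> (nat \<times> nat) set \<Rightarrow> nat \<Rightarrow> nat \<Rightarrow> nat \<Rightarrow> real" where
  "arc_kernel E x A j u w =
     (if (tree_parent A j, j) \<in> A then (if (u, w) \<in> E then x u w else 0)
      else (if (w, u) \<in> E then x w u else 0))"

lemma rt_weight_eq_arc_kernel: "rt_weight E x A f j = arc_kernel E x A j (f (tree_parent A j)) (f j)"
  unfolding rt_weight_def arc_kernel_def Let_def by simp

lemma bfs_tree_parent:
  assumes "bfs_oriented_tree m A" "1 \<le> j" "j \<le> m"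
  shows "tree_parent A j < j \<and> ((tree_parent A j, j) \<in> A \<or> (j, tree_parent A j) \<in> A)"
proof -
  have "\<exists>!i. i < j \<and> ((i, j) \<in> A \<or> (j, i) \<in> A)" using assms unfolding bfs_oriented_tree_def by auto
  then show ?thesis unfolding tree_parent_def by (rule theI')
qed

lemma sum_out_nbrs_eq:
  assumes "E \<subseteq> V \<times> V" "finite V"
  shows "(\<Sum>w\<in>V. if (u, w) \<in> E then F w else 0) = (\<Sum>w\<in>out_nbrs E u. F w)"
proof -
  have "out_nbrs E u = {w \<in> V. (u, w) \<in> E}" unfolding out_nbrs_def using assms by auto
  then show ?thesis using assms by (simp add: sum.inter_filter)
qed

lemma sum_in_nbrs_eq:
  assumes "E \<subseteq> V \<times> V" "finite V"
  shows "(\<Sum>w\<in>V. if (w, u) \<in> E then F w else 0) = (\<Sum>w\<in>in_nbrs E u. F w)"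
proof -
  have "in_nbrs E u = {w \<in> V. (w, u) \<in> E}" unfolding in_nbrs_def using assms by auto
  then show ?thesis using assms by (simp add: sum.inter_filter)
qed

text \<open>Two sets of size \<open>(1/2 + \<epsilon>) n\<close> in an \<open>n\<close>-set meet in at least \<open>2 \<epsilon> n\<close> elements.\<close>

lemma sum_min_ge_of_large_supports:
  fixes k1 k2 :: "nat \<Rightarrow> real"
  assumes V: "finite V" "card V = n" and XY: "X \<subseteq> V" "Y \<subseteq> V"
    and cX: "(1/2 + \<epsilon>) * real n \<le> real (card X)" and cY: "(1/2 + \<epsilon>) * real n \<le> real (card Y)"
    and k1: "\<And>w. w \<in> V \<Longrightarrow> 0 \<le> k1 w" "\<And>w. w \<in> X \<Longrightarrow> 1 / (b * real n) \<le> k1 w"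
    and k2: "\<And>w. w \<in> V \<Longrightarrow> 0 \<le> k2 w" "\<And>w. w \<in> Y \<Longrightarrow> 1 / (b * real n) \<le> k2 w"
    and bn: "0 < b" "0 < n"
  shows "2 * \<epsilon> / b \<le> (\<Sum>w\<in>V. min (k1 w) (k2 w))"
proof -
  have "finite X" "finite Y" using XY V finite_subset by auto
  then have "card X + card Y = card (X \<union> Y) + card (X \<inter> Y)" by (rule card_Un_Int)
  moreover have "card (X \<union> Y) \<le> n" using XY V by (metis card_mono le_sup_iff)
  ultimately have "2 * \<epsilon> * real n \<le> real (card (X \<inter> Y))" using cX cY by (simp add: algebra_simps)
  then have "2 * \<epsilon> / b \<le> real (card (X \<inter> Y)) / (b * real n)"
    using bn by (simp add: field_simps)
  also have "\<dots> = (\<Sum>w\<in>X \<inter> Y. 1 / (b * real n))" by simp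
  also have "\<dots> \<le> (\<Sum>w\<in>X \<inter> Y. min (k1 w) (k2 w))"
    using k1 k2 by (intro sum_mono) auto
  also have "\<dots> \<le> (\<Sum>w\<in>V. min (k1 w) (k2 w))"
    using XY V k1 k2 by (intro sum_mono2) auto
  finally show ?thesis .
qed
lemma sum_arc_kernel_row:
  assumes "E \<subseteq> V \<times> V" "finite V" "perfect_fractional_matching V E x" "u \<in> V"
  shows "(\<Sum>w\<in>V. arc_kernel E x A j u w) = 1"
proof (cases "(tree_parent A j, j) \<in> A")
  case True
  then have "(\<Sum>w\<in>V. arc_kernel E x A j u w) = (\<Sum>w\<in>out_nbrs E u. x u w)"
    unfolding arc_kernel_def using sum_out_nbrs_eq[OF assms(1,2)] by simp
  then show ?thesis using assms(3,4) unfolding perfect_fractional_matching_def by simp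
next
  case False
  then have "(\<Sum>w\<in>V. arc_kernel E x A j u w) = (\<Sum>w\<in>in_nbrs E u. x w u)"
    unfolding arc_kernel_def using sum_in_nbrs_eq[OF assms(1,2)] by simp
  then show ?thesis using assms(3,4) unfolding perfect_fractional_matching_def by simp
qed

lemma sum_arc_kernel_col:
  assumes "E \<subseteq> V \<times> V" "finite V" "perfect_fractional_matching V E x" "w \<in> V"
  shows "(\<Sum>u\<in>V. arc_kernel E x A j u w) = 1"
proof (cases "(tree_parent A j, j) \<in> A")
  case True
  then have "(\<Sum>u\<in>V. arc_kernel E x A j u w) = (\<Sum>u\<in>in_nbrs E w. x u w)"
    unfolding arc_kernel_def using sum_in_nbrs_eq[OF assms(1,2)] by simp
  then show ?thesis using assms(3,4) unfolding perfect_fractional_matching_def by simp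
next
  case False
  then have "(\<Sum>u\<in>V. arc_kernel E x A j u w) = (\<Sum>u\<in>out_nbrs E w. x w u)"
    unfolding arc_kernel_def using sum_out_nbrs_eq[OF assms(1,2)] by simp
  then show ?thesis using assms(3,4) unfolding perfect_fractional_matching_def by simp
qed

lemma sum_min_arc_kernel_ge:
  assumes G: "eps_digraph n \<epsilon> V E" and M: "perfect_fractional_matching V E x" and B: "b_normal n b E x"
    and u: "u \<in> V" "u' \<in> V" and b: "0 < b" and n: "0 < n"
  shows "2 * \<epsilon> / b \<le> (\<Sum>w\<in>V. min (arc_kernel E x A j u w) (arc_kernel E x A j u' w))"
proof -
  have V: "finite V" "card V = n" "out_nbrs E v \<subseteq> V" "in_nbrs E v \<subseteq> V" for v
    using G unfolding eps_digraph_def out_nbrs_def in_nbrs_def by auto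
  have deg: "(1/2 + \<epsilon>) * real n \<le> real (card (out_nbrs E v))"
    "(1/2 + \<epsilon>) * real n \<le> real (card (in_nbrs E v))" if "v \<in> V" for v
    using G that unfolding eps_digraph_def by auto
  have x: "0 \<le> x v w" "1 / (b * real n) \<le> x v w" if "(v, w) \<in> E" for v w
    using M B that unfolding perfect_fractional_matching_def b_normal_def by auto
  show ?thesis
  proof (cases "(tree_parent A j, j) \<in> A")
    case True
    then show ?thesis
      using sum_min_ge_of_large_supports[OF V(1,2) V(3) V(3) deg(1)[OF u(1)] deg(1)[OF u(2)]] x b n
      by (auto simp: arc_kernel_def out_nbrs_def)
  next
    case False
    then show ?thesis
      using sum_min_ge_of_large_supports[OF V(1,2) V(4) V(4) deg(2)[OF u(1)] deg(2)[OF u(2)]] x b n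
      by (auto simp: arc_kernel_def in_nbrs_def)
  qed
qed

lemma mixing_tree_chain_arc_kernel:
  assumes G: "eps_digraph n \<epsilon> V E" and M: "perfect_fractional_matching V E x" and B: "b_normal n b E x"
    and T: "bfs_oriented_tree m A" and v0: "v0 \<in> V" and \<epsilon>: "0 < \<epsilon>" and b: "0 < b" "2 * \<epsilon> \<le> b"
    and n: "0 < n"
  shows "mixing_tree_chain V (arc_kernel E x A) (tree_parent A) m v0 (2 * \<epsilon> / b)"
proof (unfold_locales)
  have V: "finite V" "E \<subseteq> V \<times> V" using G unfolding eps_digraph_def by auto
  then show "finite V"
    "\<And>j u. 1 \<le> j \<Longrightarrow> j \<le> m \<Longrightarrow> u \<in> V \<Longrightarrow> (\<Sum>w\<in>V. arc_kernel E x A j u w) = 1"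
    "\<And>j w. 1 \<le> j \<Longrightarrow> j \<le> m \<Longrightarrow> w \<in> V \<Longrightarrow> (\<Sum>u\<in>V. arc_kernel E x A j u w) = 1"
    using M by (simp_all add: sum_arc_kernel_row sum_arc_kernel_col)
  show "\<And>j u w. 1 \<le> j \<Longrightarrow> j \<le> m \<Longrightarrow> u \<in> V \<Longrightarrow> w \<in> V \<Longrightarrow> 0 \<le> arc_kernel E x A j u w"
    using M unfolding arc_kernel_def perfect_fractional_matching_def by auto
  show "\<And>j. 1 \<le> j \<Longrightarrow> j \<le> m \<Longrightarrow> tree_parent A j < j"
    using bfs_tree_parent[OF T] by blast
  show "\<And>j u u'. 1 \<le> j \<Longrightarrow> j \<le> m \<Longrightarrow> u \<in> V \<Longrightarrow> u' \<in> V
      \<Longrightarrow> 2 * \<epsilon> / b \<le> (\<Sum>w\<in>V. min (arc_kernel E x A j u w) (arc_kernel E x A j u' w))"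
    using sum_min_arc_kernel_ge[OF G M B _ _ b(1) n] by blast
qed (use v0 \<epsilon> b in auto)

lemma (in tree_chain) card_children_le_tree_degree:
  assumes T: "bfs_oriented_tree m A" and parent: "parent = tree_parent A"
  shows "card (children j) \<le> tree_degree A j"
proof -
  have "children j \<subseteq> {c. (j, c) \<in> A \<or> (c, j) \<in> A}"
  proof
    fix c assume "c \<in> children j"
    then have "1 \<le> c" "c \<le> m" "tree_parent A c = j" using children_D parent by auto
    then show "c \<in> {c. (j, c) \<in> A \<or> (c, j) \<in> A}" using bfs_tree_parent[OF T, of c] by auto
  qed
  moreover have "{c. (j, c) \<in> A \<or> (c, j) \<in> A} \<subseteq> {0..m}"
    using T unfolding bfs_oriented_tree_def by auto
  ultimately show ?thesis
    unfolding tree_degree_def by (meson card_mono finite_atLeastAtMost finite_subset)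
qed

text \<open>For injective \<open>f\<close> the first sum is \<open>\<Sum>w \<in> X \<inter> f ` {0..m}. \<phi> w\<close>.\<close>

definition sample_deviation :: "nat \<Rightarrow> nat \<Rightarrow> (nat \<Rightarrow> nat) \<Rightarrow> nat set \<Rightarrow> (nat \<Rightarrow> real) \<Rightarrow> real" where
  "sample_deviation n m f X \<phi> =
     \<bar>(\<Sum>j\<in>{0..m}. if f j \<in> X then \<phi> (f j) else 0) - (real m + 1) / real n * (\<Sum>w\<in>X. \<phi> w)\<bar>"

text \<open>The four weighted neighbourhood sums controlled by \<open>c_expected\<close> at each vertex.\<close>

definition nbr_tests ::
  "nat set \<Rightarrow> (nat \<times> nat) set \<Rightarrow> (nat \<Rightarrow> nat \<Rightarrow> real) \<Rightarrow> (nat set \<times> (nat \<Rightarrow> real)) set" where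
  "nbr_tests V E x = (\<Union>v\<in>V.
     {(out_nbrs E v, x v), (out_nbrs E v, \<lambda>w. x v w * log 2 (1 / x v w)),
      (in_nbrs E v, \<lambda>w. x w v), (in_nbrs E v, \<lambda>w. x w v * log 2 (1 / x w v))})"

lemma finite_nbr_tests: "finite V \<Longrightarrow> finite (nbr_tests V E x)"
  unfolding nbr_tests_def by simp

lemma card_nbr_tests_le: "finite V \<Longrightarrow> card (nbr_tests V E x) \<le> 4 * card V"
proof -
  assume "finite V"
  moreover have "card {p, q, r, s} \<le> 4" for p q r s :: "nat set \<times> (nat \<Rightarrow> real)"
    by (auto simp: card_insert_if)
  ultimately have "card (nbr_tests V E x) \<le> (\<Sum>v\<in>V. 4)"
    unfolding nbr_tests_def by (intro order_trans[OF card_UN_le] sum_mono)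
  then show ?thesis by simp
qed

lemma (in mixing_tree_chain) prob_sample_deviation_le:
  assumes X: "X \<subseteq> V" and \<phi>: "\<And>w. w \<in> X \<Longrightarrow> 0 \<le> \<phi> w \<and> \<phi> w \<le> B" and B: "0 < B"
    and L: "\<And>c. c \<le> m \<Longrightarrow> spread c \<le> L"
    and t: "concentration_threshold \<theta> L m (card V) (t / B)"
  shows "prob (\<lambda>f. t \<le> sample_deviation (card V) m f X \<phi>) \<le> 1 / real (card V) ^ 3"
proof -
  define g where "g w = (if w \<in> X then \<phi> w else 0)" for w
  have "(\<Sum>w\<in>V. g w) = (\<Sum>w\<in>X. \<phi> w)"
    unfolding g_def using X finite_V by (simp add: sum.inter_restrict[symmetric] Int_absorb1)
  then have "sample_deviation (card V) m f X \<phi>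
      = \<bar>(\<Sum>j\<in>{0..m}. g (f j)) - (real m + 1) * (\<Sum>w\<in>V. g w) / card V\<bar>" for f
    unfolding sample_deviation_def g_def by simp
  moreover have "prob (\<lambda>f. t \<le> \<bar>(\<Sum>j\<in>{0..m}. g (f j)) - (real m + 1) * (\<Sum>w\<in>V. g w) / card V\<bar>)
      \<le> 1 / real (card V) ^ 3"
    using \<phi> B L t unfolding g_def by (intro prob_deviation_le) (auto simp: less_imp_le)
  ultimately show ?thesis by simp
qed

lemma sum_inter_image:
  assumes "inj_on f I" "finite I"
  shows "(\<Sum>w\<in>X \<inter> f ` I. \<phi> w) = (\<Sum>j\<in>I. if f j \<in> X then \<phi> (f j) else 0)"
proof -
  have "(\<Sum>w\<in>X \<inter> f ` I. \<phi> w) = (\<Sum>w\<in>f ` I \<inter> X. \<phi> w)" by (simp add: Int_commute)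
  also have "\<dots> = (\<Sum>w\<in>f ` I. if w \<in> X then \<phi> w else 0)"
    using assms by (simp add: sum.inter_restrict)
  also have "\<dots> = (\<Sum>j\<in>I. if f j \<in> X then \<phi> (f j) else 0)"
    using assms by (simp add: sum.reindex)
  finally show ?thesis .
qed

lemma self_avoiding_expected_if_deviations_lt:
  assumes inj: "inj_on f {0..m}" and M: "perfect_fractional_matching V E x"
    and sets: "\<forall>S\<in>\<S>. sample_deviation n m f S (\<lambda>_. 1) < a"
    and nbrs: "\<forall>(X, \<phi>)\<in>nbr_tests V E x. sample_deviation n m f X \<phi> < c"
  shows "self_avoiding m f \<and> S_a_c_expected n V E x \<S> a c (f ` {0..m})"
proof -
  have card_image: "real (card (f ` {0..m})) = real m + 1" using inj by (simp add: card_image)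
  have deviation: "\<bar>(\<Sum>w\<in>X \<inter> f ` {0..m}. \<phi> w) - real (card (f ` {0..m})) / real n * (\<Sum>w\<in>X. \<phi> w)\<bar>
      = sample_deviation n m f X \<phi>" for X \<phi>
    unfolding sample_deviation_def sum_inter_image[OF inj finite_atLeastAtMost] card_image ..
  have "sets_expected n \<S> a (f ` {0..m})"
    unfolding sets_expected_def
  proof
    fix S assume "S \<in> \<S>"
    moreover have "real (card (f ` {0..m} \<inter> S)) = (\<Sum>w\<in>S \<inter> f ` {0..m}. 1)"
      by (simp add: Int_commute)
    moreover have "real (card S) = (\<Sum>w\<in>S. 1)" by simp
    ultimately show "\<bar>real (card (f ` {0..m} \<inter> S)) - real (card (f ` {0..m})) / real n * real (card S)\<bar> < a"
      using sets deviation[where X=S and \<phi>="\<lambda>_. 1"] by simp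
  qed
  moreover have "c_expected n V E x c (f ` {0..m})"
    unfolding c_expected_def
  proof (intro ballI conjI)
    fix v assume v: "v \<in> V"
    then have "(\<Sum>w\<in>out_nbrs E v. x v w) = 1" "(\<Sum>w\<in>in_nbrs E v. x w v) = 1"
      using M unfolding perfect_fractional_matching_def by auto
    moreover have
      "\<bar>(\<Sum>w\<in>out_nbrs E v \<inter> f ` {0..m}. x v w)
          - real (card (f ` {0..m})) / real n * (\<Sum>w\<in>out_nbrs E v. x v w)\<bar> < c"
      "\<bar>(\<Sum>w\<in>in_nbrs E v \<inter> f ` {0..m}. x w v)
          - real (card (f ` {0..m})) / real n * (\<Sum>w\<in>in_nbrs E v. x w v)\<bar> < c"
      "\<bar>(\<Sum>w\<in>out_nbrs E v \<inter> f ` {0..m}. x v w * log 2 (1 / x v w))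
          - real (card (f ` {0..m})) / real n * h_out E x v\<bar> < c"
      "\<bar>(\<Sum>w\<in>in_nbrs E v \<inter> f ` {0..m}. x w v * log 2 (1 / x w v))
          - real (card (f ` {0..m})) / real n * h_in E x v\<bar> < c"
      using nbrs v unfolding h_out_def h_in_def deviation nbr_tests_def by auto
    ultimately show
      "\<bar>(\<Sum>w\<in>out_nbrs E v \<inter> f ` {0..m}. x v w) - real (card (f ` {0..m})) / real n\<bar> < c"
      "\<bar>(\<Sum>w\<in>out_nbrs E v \<inter> f ` {0..m}. x v w * log 2 (1 / x v w))
          - real (card (f ` {0..m})) / real n * h_out E x v\<bar> < c"
      "\<bar>(\<Sum>w\<in>in_nbrs E v \<inter> f ` {0..m}. x w v) - real (card (f ` {0..m})) / real n\<bar> < c"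
      "\<bar>(\<Sum>w\<in>in_nbrs E v \<inter> f ` {0..m}. x w v * log 2 (1 / x w v))
          - real (card (f ` {0..m})) / real n * h_in E x v\<bar> < c"
      by simp_all
  qed
  ultimately show ?thesis using inj unfolding self_avoiding_def S_a_c_expected_def by simp
qed

lemma entropy_term_bounds:
  fixes y b N :: real
  assumes "1 / (b * N) \<le> y" "y \<le> b / N" "b / N \<le> 1" "0 < b" "0 < N"
  shows "0 \<le> y * log 2 (1 / y) \<and> y * log 2 (1 / y) \<le> b / N * log 2 (b * N)"
proof -
  have y: "0 < y" "y \<le> 1"
    using assms by (smt (verit) divide_pos_pos mult_pos_pos, linarith)
  then have log_nonneg: "0 \<le> log 2 (1 / y)" by simp
  have "1 / y \<le> b * N" using assms y by (simp add: field_simps)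
  then have "log 2 (1 / y) \<le> log 2 (b * N)" using y by (intro log_mono) auto
  then have "y * log 2 (1 / y) \<le> b / N * log 2 (b * N)"
    using y log_nonneg assms(2) by (intro mult_mono) auto
  then show ?thesis using y log_nonneg by simp
qed

lemma nbr_test_bounds:
  assumes E: "E \<subseteq> V \<times> V" and B: "b_normal n b E x" and b: "2 \<le> b" "b \<le> real n"
    and test: "(X, \<phi>) \<in> nbr_tests V E x"
  obtains B where "X \<subseteq> V" "B \<in> {b / n, b / n * log 2 (b * n)}" "0 < B"
    "\<And>w. w \<in> X \<Longrightarrow> 0 \<le> \<phi> w \<and> \<phi> w \<le> B"
proof -
  have n: "0 < real n" "b / n \<le> 1" "0 < b / n" using b by auto
  have x_bounds: "1 / (b * n) \<le> x v w" "x v w \<le> b / n" if "(v, w) \<in> E" for v w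
    using B that unfolding b_normal_def by auto
  then have x_le: "0 \<le> x v w \<and> x v w \<le> b / n" if "(v, w) \<in> E" for v w
    using that n b by (smt (verit) divide_pos_pos mult_pos_pos)
  have entropy_le: "0 \<le> x v w * log 2 (1 / x v w) \<and> x v w * log 2 (1 / x v w) \<le> b / n * log 2 (b * n)"
    if "(v, w) \<in> E" for v w
    using entropy_term_bounds[of b n "x v w"] x_bounds[OF that] n b by auto
  have "2 * 1 \<le> b * real n" using b by (intro mult_mono) auto
  then have log_pos: "0 < b / n * log 2 (b * n)" using n by (intro mult_pos_pos) auto
  have nbrs_V: "out_nbrs E v \<subseteq> V" "in_nbrs E v \<subseteq> V" for v
    using E unfolding out_nbrs_def in_nbrs_def by auto
  obtain v where "(X, \<phi>) \<in> {(out_nbrs E v, x v), (out_nbrs E v, \<lambda>w. x v w * log 2 (1 / x v w)),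
      (in_nbrs E v, \<lambda>w. x w v), (in_nbrs E v, \<lambda>w. x w v * log 2 (1 / x w v))}"
    using test unfolding nbr_tests_def by blast
  then consider "X = out_nbrs E v" "\<phi> = x v" | "X = out_nbrs E v" "\<phi> = (\<lambda>w. x v w * log 2 (1 / x v w))"
    | "X = in_nbrs E v" "\<phi> = (\<lambda>w. x w v)" | "X = in_nbrs E v" "\<phi> = (\<lambda>w. x w v * log 2 (1 / x w v))"
    by blast
  then show ?thesis
  proof cases
    case 1
    then show ?thesis using that[of "b / n"] nbrs_V x_le n by (auto simp: out_nbrs_def)
  next
    case 2
    then show ?thesis using that[of "b / n * log 2 (b * n)"] nbrs_V entropy_le log_pos by (auto simp: out_nbrs_def)
  next
    case 3
    then show ?thesis using that[of "b / n"] nbrs_V x_le n by (auto simp: in_nbrs_def)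
  next
    case 4
    then show ?thesis using that[of "b / n * log 2 (b * n)"] nbrs_V entropy_le log_pos by (auto simp: in_nbrs_def)
  qed
qed

lemma (in tree_chain) prob_not_inj_or_bex_le:
  assumes "\<And>j u w. 1 \<le> j \<Longrightarrow> j \<le> m \<Longrightarrow> u \<in> V \<Longrightarrow> w \<in> V \<Longrightarrow> K j u w \<le> c"
    and "finite I" "\<And>i. i \<in> I \<Longrightarrow> prob (P i) \<le> \<delta>"
    and "finite J" "\<And>j. j \<in> J \<Longrightarrow> prob (Q j) \<le> \<delta>"
  shows "prob (\<lambda>f. \<not> inj_on f {0..m} \<or> (\<exists>i\<in>I. P i f) \<or> (\<exists>j\<in>J. Q j f))
    \<le> real m ^ 2 * c + (real (card I) + real (card J)) * \<delta>"
proof -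
  have "prob (\<lambda>f. \<not> inj_on f {0..m} \<or> (\<exists>i\<in>I. P i f) \<or> (\<exists>j\<in>J. Q j f))
      \<le> prob (\<lambda>f. \<not> inj_on f {0..m}) + (prob (\<lambda>f. \<exists>i\<in>I. P i f) + prob (\<lambda>f. \<exists>j\<in>J. Q j f))"
    by (intro order_trans[OF prob_disj_le] add_left_mono prob_disj_le)
  also have "\<dots> \<le> real m ^ 2 * c + ((\<Sum>i\<in>I. \<delta>) + (\<Sum>j\<in>J. \<delta>))"
    using assms by (intro add_mono prob_not_inj_le order_trans[OF prob_bex_le] sum_mono) auto
  finally show ?thesis by (simp add: algebra_simps)
qed

lemma random_tree_good_prob:
  fixes \<epsilon> b \<alpha> \<Delta> a c :: real
  assumes G: "eps_digraph n \<epsilon> V E" and M: "perfect_fractional_matching V E x" and B: "b_normal n b E x"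
    and T: "bfs_oriented_tree m A" and deg: "\<forall>i\<in>{0..m}. real (tree_degree A i) \<le> \<Delta>"
    and v0: "v0 \<in> V" and \<S>: "\<S> \<subseteq> Pow V" "card \<S> \<le> n\<^sup>2"
    and \<epsilon>: "0 < \<epsilon>" and b: "2 \<le> b" "2 * \<epsilon> \<le> b" "b \<le> real n"
    and \<alpha>: "0 < \<alpha>" "\<alpha> \<le> 1" and \<Delta>: "\<Delta> powr (1 - \<alpha>) * (1 - 2 * \<epsilon> / b) \<le> 1 - 2 * \<epsilon> / b / 2"
    and thresholds: "\<And>t. t \<in> {a, c / (b / real n), c / (b / real n * log 2 (b * real n))} \<Longrightarrow>
      concentration_threshold (2 * \<epsilon> / b) (2 / (2 * \<epsilon> / b) * (real m + 1) powr \<alpha>) m n t"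
  shows "random_tree_prob V E x m A v0 (\<lambda>f. self_avoiding m f \<and> S_a_c_expected n V E x \<S> a c (f ` {0..m}))
    \<ge> 1 - real m ^ 2 * b / real n - real n ^ 2 * (1 / real n ^ 3) - 4 * real n * (1 / real n ^ 3)"
proof -
  define \<theta> where "\<theta> = 2 * \<epsilon> / b"
  define good where "good f \<longleftrightarrow> self_avoiding m f \<and> S_a_c_expected n V E x \<S> a c (f ` {0..m})" for f
  have n: "0 < real n" using b by simp
  have V: "finite V" "card V = n" "E \<subseteq> V \<times> V" using G unfolding eps_digraph_def by auto
  interpret mixing_tree_chain V "arc_kernel E x A" "tree_parent A" m v0 \<theta>
    unfolding \<theta>_def using mixing_tree_chain_arc_kernel[OF G M B T v0 \<epsilon>] b n by simp
  have "real (card (children j)) \<le> \<Delta>" if "j \<le> m" for j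
    using card_children_le_tree_degree[OF T refl, of j] deg that by force
  then have spread_le_L: "spread j \<le> 2 / \<theta> * (real m + 1) powr \<alpha>" if "j \<le> m" for j
    using spread_le[OF _ \<alpha>] \<Delta> that unfolding \<theta>_def by blast
  have prob_dev: "prob (\<lambda>f. t \<le> sample_deviation n m f X \<phi>) \<le> 1 / real n ^ 3"
    if "X \<subseteq> V" "\<And>w. w \<in> X \<Longrightarrow> 0 \<le> \<phi> w \<and> \<phi> w \<le> B" "0 < B"
      "t / B \<in> {a, c / (b / real n), c / (b / real n * log 2 (b * real n))}" for X \<phi> B t
    using prob_sample_deviation_le[OF that(1-3) spread_le_L] thresholds[OF that(4)] V
    unfolding \<theta>_def by simp
  have prob_set_test: "prob (\<lambda>f. a \<le> sample_deviation n m f S (\<lambda>_. 1)) \<le> 1 / real n ^ 3"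
    if "S \<in> \<S>" for S
    using that \<S> by (intro prob_dev[where B=1]) auto
  have prob_nbr_test: "prob (\<lambda>f. c \<le> sample_deviation n m f (fst p) (snd p)) \<le> 1 / real n ^ 3"
    if p: "p \<in> nbr_tests V E x" for p
  proof -
    obtain B where "fst p \<subseteq> V" "B \<in> {b / n, b / n * log 2 (b * n)}" "0 < B"
      "\<And>w. w \<in> fst p \<Longrightarrow> 0 \<le> snd p w \<and> snd p w \<le> B"
      by (rule nbr_test_bounds[OF V(3) B b(1,3), of "fst p" "snd p"]) (use p in simp_all)
    then show ?thesis by (intro prob_dev[where B=B]) auto
  qed
  have "prob (\<lambda>f. \<not> good f)
      \<le> prob (\<lambda>f. \<not> inj_on f {0..m} \<or> (\<exists>S\<in>\<S>. a \<le> sample_deviation n m f S (\<lambda>_. 1))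
           \<or> (\<exists>p\<in>nbr_tests V E x. c \<le> sample_deviation n m f (fst p) (snd p)))"
    using self_avoiding_expected_if_deviations_lt[OF _ M] unfolding good_def
    by (intro prob_mono) (force simp: not_le)
  also have "\<dots> \<le> real m ^ 2 * (b / n) + (real (card \<S>) + real (card (nbr_tests V E x))) * (1 / n ^ 3)"
    using B b n \<S> V prob_set_test prob_nbr_test unfolding b_normal_def
    by (intro prob_not_inj_or_bex_le finite_nbr_tests) (auto simp: arc_kernel_def intro: finite_subset)
  also have "\<dots> \<le> real m ^ 2 * b / n + n\<^sup>2 * (1 / n ^ 3) + 4 * n * (1 / n ^ 3)"
  proof -
    have "card \<S> + card (nbr_tests V E x) \<le> n\<^sup>2 + 4 * n"
      using \<S>(2) card_nbr_tests_le[OF V(1), of E x] V(2) by simp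
    then have "real (card \<S>) + real (card (nbr_tests V E x)) \<le> n\<^sup>2 + 4 * n"
      by (metis of_nat_add of_nat_le_iff of_nat_mult of_nat_numeral of_nat_power)
    then have "(real (card \<S>) + real (card (nbr_tests V E x))) * (1 / n ^ 3) \<le> (n\<^sup>2 + 4 * n) * (1 / n ^ 3)"
      by (intro mult_right_mono) simp_all
    then show ?thesis by (simp add: algebra_simps)
  qed
  finally have "prob (\<lambda>f. \<not> good f) \<le> real m ^ 2 * b / n + n\<^sup>2 * (1 / n ^ 3) + 4 * n * (1 / n ^ 3)" .
  moreover have "random_tree_prob V E x m A v0 good = prob good"
    unfolding random_tree_prob_def prob_eq_sum weight_def rt_weight_eq_arc_kernel ..
  ultimately show ?thesis using prob_not[of good] unfolding good_def by simp
qed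

section \<open>Choice of the parameters\<close>

text \<open>Growth conditions on \<open>r = \<surd>(ln n)\<close>, all of which hold for large \<open>n\<close>;
  \<open>(ln b + r\<^sup>2) / ln 2\<close> is \<open>log\<^sub>2 (b n)\<close>.\<close>

definition admissible_scale :: "real \<Rightarrow> real \<Rightarrow> real \<Rightarrow> real \<Rightarrow> bool" where
  "admissible_scale \<theta> \<gamma> b r \<longleftrightarrow> 1 \<le> r \<and> b \<le> exp (r\<^sup>2) \<and> \<theta> / (4 * \<gamma> * r) < 1 \<and>
     12 / \<theta> * exp (- 3 * r) * (b * ((ln b + r\<^sup>2) / ln 2)) \<le> exp (- r / 17) \<and>
     3 * r\<^sup>2 + 1 \<le> \<theta>\<^sup>2 * exp (2 * r) * (exp (- r / 17))\<^sup>2 / (288 * (b * ((ln b + r\<^sup>2) / ln 2))\<^sup>2) \<and>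
     9 * b * exp (2 * \<gamma> * r) * exp (- (r\<^sup>2 / 2)) + exp (- r\<^sup>2) + 4 * exp (- (2 * r\<^sup>2)) \<le> exp (- (r\<^sup>2 / 3))"

lemma eventually_admissible_scale:
  assumes "0 < \<theta>" "0 < \<gamma>" "0 < b"
  shows "\<forall>\<^sub>F n in sequentially. admissible_scale \<theta> \<gamma> b (sqrt (ln (real n)))"
proof -
  have "\<forall>\<^sub>F r in at_top. admissible_scale \<theta> \<gamma> b r"
    unfolding admissible_scale_def using assms by (intro eventually_conj; real_asymp)
  moreover have "filterlim (\<lambda>n. sqrt (ln (real n))) at_top sequentially" by real_asymp
  ultimately show ?thesis by (rule eventually_compose_filterlim)
qed

lemma tree_size_powr_le:
  fixes \<theta> \<gamma> N r M :: real
  assumes \<theta>: "0 < \<theta>" "\<theta> \<le> 1" and \<gamma>: "0 < \<gamma>" "\<gamma> \<le> \<theta> / 64"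
    and N: "0 < N" "ln N = r\<^sup>2" and r: "1 \<le> r" and \<beta>: "\<theta> / (4 * \<gamma> * r) < 1"
    and M: "N powr (1/4) \<le> M" "M \<le> 3 * exp (\<gamma> * r) * N powr (1/4)"
  shows "M powr (1 - \<theta> / (4 * \<gamma> * r)) \<le> 3 * N powr (1/4) * exp (- 3 * r)"
proof -
  define \<beta> where "\<beta> = \<theta> / (4 * \<gamma> * r)"
  define q where "q = N powr (1/4)"
  have q_pos: "0 < q" unfolding q_def using N by simp
  have M_pos: "0 < M" using M q_pos unfolding q_def by linarith
  have "M powr (1 - \<beta>) = M * M powr (- \<beta>)"
    using M_pos by (simp add: powr_diff powr_minus divide_inverse)
  also have "\<dots> \<le> M * q powr (- \<beta>)"
    using M q_pos M_pos \<beta> \<theta> \<gamma> r unfolding q_def \<beta>_def by (intro mult_left_mono powr_mono2') auto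
  also have "q powr (- \<beta>) = exp (- (\<theta> * r / (16 * \<gamma>)))"
  proof -
    have "q powr (- \<beta>) = exp (- \<beta> / 4 * r\<^sup>2)"
      unfolding q_def using N by (simp add: powr_powr powr_def)
    also have "- \<beta> / 4 * r\<^sup>2 = - (\<theta> * r / (16 * \<gamma>))"
      unfolding \<beta>_def using r \<gamma> by (simp add: field_simps power2_eq_square)
    finally show ?thesis .
  qed
  also have "M * exp (- (\<theta> * r / (16 * \<gamma>))) \<le> 3 * exp (\<gamma> * r) * q * exp (- (\<theta> * r / (16 * \<gamma>)))"
    using M unfolding q_def by (intro mult_right_mono) auto
  also have "\<dots> = 3 * q * exp ((\<gamma> - \<theta> / (16 * \<gamma>)) * r)"
    by (simp add: exp_add[symmetric] algebra_simps)
  also have "\<dots> \<le> 3 * q * exp (- 3 * r)"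
  proof -
    have "4 \<le> \<theta> / (16 * \<gamma>)" using \<gamma> by (simp add: field_simps)
    then have "(\<gamma> - \<theta> / (16 * \<gamma>)) * r \<le> - 3 * r" using \<gamma> \<theta> r by (intro mult_right_mono) auto
    then show ?thesis using q_pos by simp
  qed
  finally show ?thesis unfolding \<beta>_def q_def .
qed

lemma two_exp_neg_le_inverse_cube:
  fixes N r y :: real
  assumes "0 < N" "ln N = r\<^sup>2" "3 * r\<^sup>2 + 1 \<le> y"
  shows "2 * exp (- y) \<le> 1 / N ^ 3"
proof -
  have "exp (r\<^sup>2) = N" using assms(1,2) by (metis exp_ln)
  then have cube: "exp (- (3 * r\<^sup>2)) = 1 / N ^ 3"
    using exp_of_nat_mult[of 3 "r\<^sup>2"] by (simp add: exp_minus inverse_eq_divide)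
  have "2 * exp (- y) \<le> 2 * exp (- 1) * exp (- (3 * r\<^sup>2))"
    using assms(3) by (simp flip: exp_add)
  also have "\<dots> \<le> exp (- (3 * r\<^sup>2))"
    using exp_ge_add_one_self[of 1] by (simp add: exp_minus field_simps)
  finally show ?thesis unfolding cube .
qed

lemma concentration_threshold_if_admissible:
  fixes \<theta> \<gamma> b r t :: real
  assumes \<theta>: "0 < \<theta>" "\<theta> \<le> 1" and \<gamma>: "0 < \<gamma>" "\<gamma> \<le> \<theta> / 64" and b: "2 \<le> b"
    and n: "0 < n" "ln (real n) = r\<^sup>2" and adm: "admissible_scale \<theta> \<gamma> b r"
    and M: "real n powr (1/4) + 1 \<le> real m + 1" "real m + 1 \<le> 3 * exp (\<gamma> * r) * real n powr (1/4)"
    and t: "real n powr (1/4) * exp (- r / 17) / (b * log 2 (b * real n)) \<le> t" "t \<le> real n powr (1/4)"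
  shows "concentration_threshold \<theta> (2 / \<theta> * (real m + 1) powr (1 - \<theta> / (4 * \<gamma> * r))) m n t"
proof -
  define N where "N = real n"
  define q where "q = N powr (1/4)"
  define M1 where "M1 = real m + 1"
  define L where "L = 2 / \<theta> * M1 powr (1 - \<theta> / (4 * \<gamma> * r))"
  define lg where "lg = (ln b + r\<^sup>2) / ln 2"
  define \<rho> where "\<rho> = exp (- r / 17) / (b * lg)"
  have N_pos: "0 < N" and lnN: "ln N = r\<^sup>2" using n unfolding N_def by auto
  have q_pos: "0 < q" unfolding q_def using N_pos by simp
  have r: "1 \<le> r" "\<theta> / (4 * \<gamma> * r) < 1"
    and E4: "12 / \<theta> * exp (- 3 * r) * (b * lg) \<le> exp (- r / 17)"
    and E5: "3 * r\<^sup>2 + 1 \<le> \<rho>\<^sup>2 * \<theta>\<^sup>2 * exp (2 * r) / 288"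
    using adm b unfolding admissible_scale_def lg_def \<rho>_def
    by (simp_all add: power_divide power_mult_distrib field_simps)
  have "ln 2 \<le> ln b" using b by simp
  then have lg: "log 2 (b * N) = lg" "1 \<le> lg"
    using b N_pos unfolding lg_def log_def by (simp_all add: ln_mult lnN add_increasing2)
  have t_lower: "q * \<rho> \<le> t" and t_upper: "t \<le> q"
    using t lg(1) unfolding \<rho>_def q_def N_def by simp_all
  have M1: "q \<le> M1" "M1 \<le> 3 * exp (\<gamma> * r) * q" "0 < M1"
    using M q_pos unfolding q_def N_def M1_def by auto
  have Mp: "M1 powr (1 - \<theta> / (4 * \<gamma> * r)) \<le> 3 * q * exp (- 3 * r)"
    using tree_size_powr_le[OF \<theta> \<gamma> N_pos lnN r] M1 unfolding q_def by simp
  have \<rho>_nonneg: "0 \<le> \<rho>" unfolding \<rho>_def using b lg by simp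
  have "2 * L \<le> 12 / \<theta> * exp (- 3 * r) * q"
    unfolding L_def using Mp \<theta> by (simp add: field_simps)
  also have "\<dots> \<le> q * \<rho>"
  proof -
    have "12 / \<theta> * exp (- 3 * r) \<le> \<rho>"
      using E4 b lg unfolding \<rho>_def by (simp add: field_simps)
    then have "q * (12 / \<theta> * exp (- 3 * r)) \<le> q * \<rho>" using q_pos by (intro mult_left_mono) auto
    then show ?thesis by (metis mult.commute)
  qed
  finally have L_le: "2 * L \<le> t" using t_lower by simp
  have "3 * r\<^sup>2 + 1 \<le> \<rho>\<^sup>2 * \<theta>\<^sup>2 * exp (2 * r) / 288" by (rule E5)
  also have "\<dots> \<le> t\<^sup>2 * \<theta>\<^sup>2 / (32 * (3 * q * exp (- 3 * r)) * (3 * exp (\<gamma> * r) * q))"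
  proof -
    have "(q * \<rho>)\<^sup>2 \<le> t\<^sup>2" using t_lower q_pos \<rho>_nonneg by (intro power_mono) auto
    then have "(q * \<rho>)\<^sup>2 * \<theta>\<^sup>2 \<le> t\<^sup>2 * \<theta>\<^sup>2" by (rule mult_right_mono) simp
    then have "\<rho>\<^sup>2 * \<theta>\<^sup>2 \<le> t\<^sup>2 * \<theta>\<^sup>2 / q\<^sup>2"
      using q_pos by (simp add: power_mult_distrib field_simps)
    moreover have "exp (2 * r) \<le> 1 / (exp (- 3 * r) * exp (\<gamma> * r))"
    proof -
      have "\<gamma> * r \<le> 1 * r" using \<gamma> \<theta> r by (intro mult_right_mono) auto
      then have "exp (2 * r) \<le> exp (3 * r - \<gamma> * r)" by simp
      then show ?thesis by (simp add: exp_diff exp_minus field_simps)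
    qed
    ultimately have "\<rho>\<^sup>2 * \<theta>\<^sup>2 * exp (2 * r) \<le> t\<^sup>2 * \<theta>\<^sup>2 / q\<^sup>2 * (1 / (exp (- 3 * r) * exp (\<gamma> * r)))"
      by (intro mult_mono) auto
    then show ?thesis using q_pos by (simp add: field_simps power2_eq_square)
  qed
  also have "\<dots> \<le> t\<^sup>2 * \<theta>\<^sup>2 / (32 * M1 powr (1 - \<theta> / (4 * \<gamma> * r)) * M1)"
  proof -
    have "M1 powr (1 - \<theta> / (4 * \<gamma> * r)) * M1 \<le> (3 * q * exp (- 3 * r)) * (3 * exp (\<gamma> * r) * q)"
      using Mp M1 q_pos by (intro mult_mono) auto
    then show ?thesis using M1 by (intro frac_le) (auto simp: mult_ac)
  qed
  also have "\<dots> = t\<^sup>2 * \<theta> / (16 * L * M1)"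
    unfolding L_def using \<theta> by (simp add: field_simps power2_eq_square)
  finally have "2 * exp (- (t\<^sup>2 * \<theta> / (16 * L * M1))) \<le> 1 / N ^ 3"
    using N_pos lnN by (intro two_exp_neg_le_inverse_cube)
  then show ?thesis
    using L_le t_upper M1 unfolding concentration_threshold_def L_def M1_def N_def q_def by simp
qed

lemma thresholds_in_range:
  fixes N r b t :: real
  assumes N: "0 < N" "ln N = r\<^sup>2" and r: "1 \<le> r" and b: "2 \<le> b" "b \<le> N"
    and t: "t \<in> {N powr (1/4 - 1 / (17 * r)), N powr (- 3/4 - 1 / (18 * r)) / (b / N),
                  N powr (- 3/4 - 1 / (18 * r)) / (b / N * log 2 (b * N))}"
  shows "N powr (1/4) * exp (- r / 17) / (b * log 2 (b * N)) \<le> t \<and> t \<le> N powr (1/4)"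
proof -
  define q where "q = N powr (1/4)"
  define lg where "lg = log 2 (b * N)"
  have powr_exp: "N powr a = exp (a * r\<^sup>2)" for a using N by (simp add: powr_def)
  have "(1/4 - 1 / (17 * r)) * r\<^sup>2 = 1/4 * r\<^sup>2 + - r / 17"
    "(- 3/4 - 1 / (18 * r)) * r\<^sup>2 = 1/4 * r\<^sup>2 + - r / 18 - r\<^sup>2"
    using r by (simp_all add: field_simps power2_eq_square)
  then have "N powr (1/4 - 1 / (17 * r)) = exp (1/4 * r\<^sup>2) * exp (- r / 17)"
    "N powr (- 3/4 - 1 / (18 * r)) = exp (1/4 * r\<^sup>2) * exp (- r / 18) / exp (r\<^sup>2)"
    unfolding powr_exp by (simp_all only: exp_add exp_diff)
  moreover have "exp (1/4 * r\<^sup>2) = q" "exp (r\<^sup>2) = N"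
    unfolding q_def powr_exp using N by (simp_all flip: N(2))
  ultimately have "N powr (1/4 - 1 / (17 * r)) = q * exp (- r / 17)"
    "N powr (- 3/4 - 1 / (18 * r)) = q * exp (- r / 18) / N"
    by simp_all
  then have t_cases: "t \<in> {q * exp (- r / 17), q * exp (- r / 18) / b, q * exp (- r / 18) / (b * lg)}"
    using t N unfolding lg_def by auto
  have q: "0 < q" unfolding q_def using N by simp
  have "2 * 1 \<le> b * N" using b by (intro mult_mono) auto
  then have lg: "1 \<le> lg" unfolding lg_def by simp
  have e: "exp (- r / 17) \<le> exp (- r / 18)" "exp (- r / 18) \<le> 1" using r by auto
  have div_le: "y / d \<le> y" if "0 \<le> y" "1 \<le> d" for y d :: real
    using frac_le[of y y 1 d] that by simp
  have bl: "1 \<le> b * lg" "b \<le> b * lg" using mult_mono[of 1 b 1 lg] b lg by auto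
  have e17: "q * exp (- r / 17) \<le> q * exp (- r / 18)" "q * exp (- r / 18) \<le> q"
    using q e by simp_all
  have "q * exp (- r / 17) / (b * lg) \<le> q * exp (- r / 17)"
    using q bl by (intro div_le) auto
  moreover have "q * exp (- r / 17) / (b * lg) \<le> q * exp (- r / 18) / (b * lg)"
    using e17 bl by (intro divide_right_mono) auto
  moreover have "q * exp (- r / 18) / (b * lg) \<le> q * exp (- r / 18) / b"
    using q b bl by (intro divide_left_mono) auto
  moreover have "q * exp (- r / 18) / b \<le> q * exp (- r / 18)"
    using q b by (intro div_le) auto
  moreover have "q * exp (- r / 18) / (b * lg) \<le> q * exp (- r / 18)"
    using q bl by (intro div_le) auto
  ultimately show ?thesis using t_cases e17 unfolding q_def lg_def by auto
qed

lemma exp_quarter_mult_le: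
  fixes \<theta> :: real
  assumes "0 \<le> \<theta>" "\<theta> \<le> 1"
  shows "exp (\<theta> / 4) * (1 - \<theta>) \<le> 1 - \<theta> / 2"
proof -
  have "exp (\<theta> / 4) \<le> 1 + \<theta> / 4 + (\<theta> / 4)\<^sup>2" using assms by (intro exp_bound) auto
  also have "\<dots> \<le> 1 + \<theta> / 2"
    using mult_left_mono[of \<theta> 1 \<theta>] assms by (simp add: power2_eq_square)
  finally have "exp (\<theta> / 4) * (1 - \<theta>) \<le> (1 + \<theta> / 2) * (1 - \<theta>)"
    using assms by (intro mult_right_mono) auto
  also have "\<dots> \<le> 1 - \<theta> / 2" using assms by (simp add: algebra_simps power2_eq_square)
  finally show ?thesis .
qed

lemma failure_bound_le:
  fixes b \<gamma> N r :: real and m :: nat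
  assumes N: "0 < N" "ln N = r\<^sup>2" and b: "0 < b"
    and m: "real (m + 1) \<le> 3 * exp (\<gamma> * r) * N powr (1/4)"
    and adm: "9 * b * exp (2 * \<gamma> * r) * exp (- (r\<^sup>2 / 2)) + exp (- r\<^sup>2) + 4 * exp (- (2 * r\<^sup>2)) \<le> exp (- (r\<^sup>2 / 3))"
  shows "1 - real m ^ 2 * b / N - N ^ 2 * (1 / N ^ 3) - 4 * N * (1 / N ^ 3) \<ge> 1 - N powr (-1/3)"
proof -
  have powr_exp: "N powr a = exp (a * r\<^sup>2)" for a using N by (simp add: powr_def)
  have N_exp: "N = exp (r\<^sup>2)" using N by (metis exp_ln)
  have "real m \<le> 3 * exp (\<gamma> * r) * exp (r\<^sup>2 / 4)" using m unfolding powr_exp by simp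
  then have "(real m)\<^sup>2 \<le> (3 * exp (\<gamma> * r) * exp (r\<^sup>2 / 4))\<^sup>2" by (intro power_mono) auto
  also have "\<dots> = 9 * exp (2 * \<gamma> * r) * exp (r\<^sup>2 / 2)"
    by (simp add: power_mult_distrib power2_eq_square exp_add[symmetric] algebra_simps)
  finally have "real m ^ 2 * b / N \<le> 9 * exp (2 * \<gamma> * r) * exp (r\<^sup>2 / 2) * b / N"
    using b N by (intro divide_right_mono mult_right_mono) auto
  also have "\<dots> = 9 * b * exp (2 * \<gamma> * r) * exp (- (r\<^sup>2 / 2))"
    unfolding N_exp by (simp add: exp_minus field_simps exp_add[symmetric])
  finally have "real m ^ 2 * b / N \<le> 9 * b * exp (2 * \<gamma> * r) * exp (- (r\<^sup>2 / 2))" .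
  moreover have "N ^ 2 * (1 / N ^ 3) = exp (- r\<^sup>2)" "4 * N * (1 / N ^ 3) = 4 * exp (- (2 * r\<^sup>2))"
    unfolding N_exp by (simp_all add: exp_minus power2_eq_square power3_eq_cube field_simps exp_add[symmetric])
  moreover have "N powr (-1/3) = exp (- (r\<^sup>2 / 3))" unfolding powr_exp by simp
  ultimately show ?thesis using adm by linarith
qed

lemma random_tree_good_if_admissible:
  fixes \<epsilon> b \<gamma> :: real
  assumes \<epsilon>: "0 < \<epsilon>" "\<epsilon> \<le> 1" and b: "2 \<le> b" and \<gamma>: "0 < \<gamma>" "\<gamma> \<le> \<epsilon> / (32 * b)"
    and adm: "admissible_scale (2 * \<epsilon> / b) \<gamma> b (sqrt (ln (real n)))"
    and G: "eps_digraph n \<epsilon> V E" and M: "perfect_fractional_matching V E x" and B: "b_normal n b E x"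
    and T: "bfs_oriented_tree m A"
    and deg: "\<forall>i\<in>{0..m}. real (tree_degree A i) \<le> exp (\<gamma> * sqrt (ln (real n)))"
    and m: "real n powr (1/4) + 1 \<le> real (m + 1)"
      "real (m + 1) \<le> 3 * exp (\<gamma> * sqrt (ln (real n))) * real n powr (1/4)"
    and v0: "v0 \<in> V" and \<S>: "\<S> \<subseteq> Pow V" "card \<S> \<le> n^2"
  shows "let P = random_tree_prob V E x m A v0
             (\<lambda>f. self_avoiding m f \<and>
                  S_a_c_expected n V E x \<S>
                    (real n powr (1/4 - 1 / (17 * sqrt (ln (real n)))))
                    (real n powr (- 3/4 - 1 / (18 * sqrt (ln (real n)))))
                    (f ` {0..m}))
       in P \<ge> 1 - real m ^ 2 * b / real n - real n ^ 2 * (1 / real n ^ 3) - 4 * real n * (1 / real n ^ 3)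
          \<and> 1 - real m ^ 2 * b / real n - real n ^ 2 * (1 / real n ^ 3) - 4 * real n * (1 / real n ^ 3)
              \<ge> 1 - real n powr (-1/3)"
proof -
  define \<theta> where "\<theta> = 2 * \<epsilon> / b"
  define r where "r = sqrt (ln (real n))"
  define \<alpha> where "\<alpha> = 1 - \<theta> / (4 * \<gamma> * r)"
  have \<theta>: "0 < \<theta>" "\<theta> \<le> 1" "\<gamma> \<le> \<theta> / 64" using \<epsilon> b \<gamma> unfolding \<theta>_def by auto
  have r: "1 \<le> r" "b \<le> exp (r\<^sup>2)" "\<theta> / (4 * \<gamma> * r) < 1"
    using adm unfolding admissible_scale_def \<theta>_def r_def by auto
  then have n: "0 < n" "ln (real n) = r\<^sup>2" unfolding r_def by (auto intro: gr0I)
  have "exp (r\<^sup>2) = real n" using n by (simp flip: n(2))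
  then have b_le_n: "b \<le> real n" using r(2) by simp
  have \<alpha>: "0 < \<alpha>" "\<alpha> \<le> 1" unfolding \<alpha>_def using \<theta> \<gamma> r by auto
  have "exp (\<gamma> * r) powr (1 - \<alpha>) = exp (\<theta> / 4)"
    unfolding \<alpha>_def using \<gamma> r by (simp add: exp_powr_real)
  then have \<Delta>: "exp (\<gamma> * r) powr (1 - \<alpha>) * (1 - \<theta>) \<le> 1 - \<theta> / 2"
    using exp_quarter_mult_le[of \<theta>] \<theta> by simp
  have adm': "admissible_scale \<theta> \<gamma> b r" using adm unfolding \<theta>_def r_def .
  have m': "real n powr (1/4) + 1 \<le> real m + 1" "real m + 1 \<le> 3 * exp (\<gamma> * r) * real n powr (1/4)"
    using m unfolding r_def by simp_all
  have "concentration_threshold \<theta> (2 / \<theta> * (real m + 1) powr \<alpha>) m n t"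
    if "t \<in> {real n powr (1/4 - 1 / (17 * r)), real n powr (- 3/4 - 1 / (18 * r)) / (b / real n),
             real n powr (- 3/4 - 1 / (18 * r)) / (b / real n * log 2 (b * real n))}" for t
  proof -
    have "real n powr (1/4) * exp (- r / 17) / (b * log 2 (b * real n)) \<le> t \<and> t \<le> real n powr (1/4)"
      using n b_le_n by (intro thresholds_in_range[OF _ _ r(1) b _ that]) auto
    then show ?thesis
      unfolding \<alpha>_def using concentration_threshold_if_admissible[OF \<theta>(1,2) \<gamma>(1) \<theta>(3) b n adm' m'] by blast
  qed
  then have "random_tree_prob V E x m A v0 (\<lambda>f. self_avoiding m f \<and> S_a_c_expected n V E x \<S>
      (real n powr (1/4 - 1 / (17 * r))) (real n powr (- 3/4 - 1 / (18 * r))) (f ` {0..m}))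
    \<ge> 1 - real m ^ 2 * b / real n - real n ^ 2 * (1 / real n ^ 3) - 4 * real n * (1 / real n ^ 3)"
    using \<epsilon> b b_le_n \<alpha> \<Delta> deg unfolding \<theta>_def r_def
    by (intro random_tree_good_prob[OF G M B T _ v0 \<S>]) auto
  moreover have "1 - real m ^ 2 * b / real n - real n ^ 2 * (1 / real n ^ 3) - 4 * real n * (1 / real n ^ 3)
      \<ge> 1 - real n powr (-1/3)"
    using n b m(2) adm unfolding admissible_scale_def r_def
    by (intro failure_bound_le[where \<gamma>=\<gamma> and r=r]) (auto simp: r_def)
  ultimately show ?thesis unfolding r_def Let_def by simp
qed

theorem corollary5p7:
  "\<forall>\<epsilon>::real. 0 < \<epsilon> \<and> \<epsilon> \<le> 1 \<longrightarrow>
   (\<exists>b0::real. \<forall>b::real. b \<ge> b0 \<longrightarrow>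
   (\<exists>\<gamma>0::real. \<gamma>0 > 0 \<and> (\<forall>\<gamma>::real. 0 < \<gamma> \<and> \<gamma> \<le> \<gamma>0 \<longrightarrow>
   (\<exists>n0::nat. \<forall>n::nat. n \<ge> n0 \<longrightarrow>
   (\<forall>(V::nat set) (E::(nat \<times> nat) set) (x::nat \<Rightarrow> nat \<Rightarrow> real) (m::nat)
      (A::(nat \<times> nat) set) (v0::nat) (\<S>::nat set set).
      eps_digraph n \<epsilon> V E \<longrightarrow>
      perfect_fractional_matching V E x \<longrightarrow>
      b_normal n b E x \<longrightarrow>
      bfs_oriented_tree m A \<longrightarrow>
      (\<forall>i\<in>{0..m}. real (tree_degree A i) \<le> exp (\<gamma> * sqrt (ln (real n)))) \<longrightarrow>
      real n powr (1/4) + 1 \<le> real (m + 1) \<longrightarrow>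
      real (m + 1) \<le> 3 * exp (\<gamma> * sqrt (ln (real n))) * real n powr (1/4) \<longrightarrow>
      v0 \<in> V \<longrightarrow>
      \<S> \<subseteq> Pow V \<longrightarrow> card \<S> \<le> n^2 \<longrightarrow>
      (let P = random_tree_prob V E x m A v0
             (\<lambda>f. self_avoiding m f \<and>
                  S_a_c_expected n V E x \<S>
                    (real n powr (1/4 - 1 / (17 * sqrt (ln (real n)))))
                    (real n powr (- 3/4 - 1 / (18 * sqrt (ln (real n)))))
                    (f ` {0..m}))
       in P \<ge> 1 - real m ^ 2 * b / real n - real n ^ 2 * (1 / real n ^ 3) - 4 * real n * (1 / real n ^ 3)
          \<and> 1 - real m ^ 2 * b / real n - real n ^ 2 * (1 / real n ^ 3) - 4 * real n * (1 / real n ^ 3)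
              \<ge> 1 - real n powr (-1/3)))))))"
  apply (intro allI impI)
  subgoal for \<epsilon>
    apply (rule exI[of _ 2], intro allI impI)
    subgoal for b
      apply (rule exI[of _ "\<epsilon> / (32 * b)"], intro conjI allI impI)
       apply simp
      subgoal premises prems for \<gamma>
      proof -
        have "0 < 2 * \<epsilon> / b" "0 < \<gamma>" "0 < b" using prems by auto
        then obtain N where "\<forall>n\<ge>N. admissible_scale (2 * \<epsilon> / b) \<gamma> b (sqrt (ln (real n)))"
          using eventually_admissible_scale unfolding eventually_sequentially by blast
        then show ?thesis
          using prems by (intro exI[of _ N] allI impI random_tree_good_if_admissible) auto
      qed
      done
    done
  done

end
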